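(* In the deconvolution setting of the context, suppose that the source condition $(\varphi,T)\in\mathcal F(0,\beta,C)$ and Assumption D hold and $\alpha_n^{3/2+\beta\wedge1}n^{1/2}\to0$. Then for every $\gamma\in(0,1)$, $\mathbb E|C^{2,\mathrm g}_{1-\gamma,n}|_\infty$ and $\mathbb E|C^{2,\mathrm{ci}}_{1-\gamma,n}|_\infty$ are $O\left(\frac{1}{\alpha_n^{3/2}n^{1/2}}\right)$.
   Context: Deconvolution model: $Y=Z+U$, $Z,U$ independent real random variables; $Z$ has density $\varphi$, $U$ has known density $f$, $Y$ has density $r$. On $L_2[a,b]$: $(T\varphi)(y)=\int\varphi(z)f(y-z)dz$, $(T^*\psi)(z)=\int\psi(y)f(y-z)dy$, $r=T\varphi$. From an i.i.d. sample $(Y_i)_{i=1}^n$: $\widehat{T^*r}(z)=\frac1n\sum_if(Y_i-z)$, $\hat\varphi_{\alpha_n}=(\alpha_nI+T^*T)^{-1}\widehat{T^*r}$, $\alpha_n>0$, $\alpha_n\to0$. $\|\cdot\|$: $L_2$ norm; $\|\cdot\|_\infty$: sup norm; $\|A\|_{2,\infty}=\sup_{\|\psi\|\le1}\|A\psi\|_\infty$. Source class $\mathcal F(0,\beta,C)$: pairs $(\varphi,T)$ with $\varphi$ continuous on $[a,b]$, $\|\varphi\|_\infty\le M$, $T^*$ bounded from $L_2[a,b]$ into continuous functions, $\varphi=(T^*T)^\beta T^*\psi$, $\psi\in L_2[a,b]$, $\|T^*\|_{2,\infty}\vee\|\psi\|\vee\|T\|^{-1}\le C$. Assumption D: (i)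 i.i.d. sample; (ii) $f,\varphi,r$ continuous and compactly supported in subsets of $[a,b]$; (iii) $f\in C^s_M[a,b]$, $s\in(0,1]$; (iv) $T$ one-to-one. Confidence sets: $C^{2,s}_{1-\gamma,n}(z)=[\hat\varphi_{\alpha_n}(z)-q^{2,s},\hat\varphi_{\alpha_n}(z)+q^{2,s}]$ with $q^{2,\mathrm{ci}}=2\|\nu^\varepsilon_{2,n}\|_\infty+\frac{3\|f\|_\infty(\|T^*\|_{2,\infty}/2+\alpha_n^{1/2})\sqrt{2\log(2/\gamma)}}{\alpha_n^{3/2}n^{1/2}}$, $\nu^\varepsilon_{2,n}=\frac1n\sum_i(\alpha_nI+T^*T)^{-1}\varepsilon_if(Y_i-\cdot)$ (i.i.d. Rademacher $\varepsilon_i$ independent of the data), and $q^{2,\mathrm g}=c_{2,1-\gamma}\frac{\|T^*\|_{2,\infty}/2+\alpha_n^{1/2}}{\alpha_n^{3/2}n^{1/2}}$, $c_{2,1-\gamma}$ the $(1-\gamma)$-quantile of $\|\mathbb G_2\|_\infty$ for a centered Gaussian process with covariance $\mathbb E[f(Y-s)f(Y-t)]$. Diameter $|C^{2,s}_{1-\gamma,n}|_\infty=2q^{2,s}$. *)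

theory Defs
  imports "HOL-Probability.Probability" "HOL-Library.Landau_Symbols"
begin

text \<open>L2[a,b] (functions real => real, identified a.e. only through the
  inner products below), its inner product and norm, and the sup norm on [a,b].\<close>

definition L2ab :: "real \<Rightarrow> real \<Rightarrow> (real \<Rightarrow> real) set" where
  "L2ab a b = {g. g \<in> borel_measurable lborel \<and> set_integrable lborel {a..b} (\<lambda>x. (g x)\<^sup>2)}"

definition inner2 :: "real \<Rightarrow> real \<Rightarrow> (real \<Rightarrow> real) \<Rightarrow> (real \<Rightarrow> real) \<Rightarrow> real" where
  "inner2 a b g h = (LINT x:{a..b}|lborel. g x * h x)"

definition norm2 :: "real \<Rightarrow> real \<Rightarrow> (real \<Rightarrow> real) \<Rightarrow> real" where
  "norm2 a b g = sqrt (LINT x:{a..b}|lborel. (g x)\<^sup>2)"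

definition supnorm :: "real \<Rightarrow> real \<Rightarrow> (real \<Rightarrow> real) \<Rightarrow> real" where
  "supnorm a b g = (SUP z\<in>{a..b}. \<bar>g z\<bar>)"

definition Top :: "real \<Rightarrow> real \<Rightarrow> (real \<Rightarrow> real) \<Rightarrow> (real \<Rightarrow> real) \<Rightarrow> (real \<Rightarrow> real)" where
  "Top a b f g = (\<lambda>y. LINT z:{a..b}|lborel. g z * f (y - z))"

definition Tadj :: "real \<Rightarrow> real \<Rightarrow> (real \<Rightarrow> real) \<Rightarrow> (real \<Rightarrow> real) \<Rightarrow> (real \<Rightarrow> real)" where
  "Tadj a b f \<psi> = (\<lambda>z. LINT y:{a..b}|lborel. \<psi> y * f (y - z))"

definition opnorm_2inf :: "real \<Rightarrow> real \<Rightarrow> ((real \<Rightarrow> real) \<Rightarrow> (real \<Rightarrow> real)) \<Rightarrow> real" where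
  "opnorm_2inf a b A = (SUP \<psi>\<in>{\<psi>\<in>L2ab a b. norm2 a b \<psi> \<le> 1}. supnorm a b (A \<psi>))"

definition opnorm_2 :: "real \<Rightarrow> real \<Rightarrow> ((real \<Rightarrow> real) \<Rightarrow> (real \<Rightarrow> real)) \<Rightarrow> real" where
  "opnorm_2 a b A = (SUP g\<in>{g\<in>L2ab a b. norm2 a b g \<le> 1}. norm2 a b (A g))"

text \<open>Tikhonov resolvent (alpha I + T*T)^{-1} g, applied to continuous g on [a,b]:
  the unique L2[a,b] function h (vanishing outside [a,b]) with
  alpha h + T*T h = g on [a,b].\<close>

definition resolvent :: "real \<Rightarrow> real \<Rightarrow> (real \<Rightarrow> real) \<Rightarrow> real \<Rightarrow> (real \<Rightarrow> real) \<Rightarrow> (real \<Rightarrow> real)" where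
  "resolvent a b f \<alpha> g = (THE h. h \<in> L2ab a b \<and> (\<forall>z. z \<notin> {a..b} \<longrightarrow> h z = 0) \<and>
      (\<forall>z\<in>{a..b}. \<alpha> * h z + Tadj a b f (Top a b f h) z = g z))"

text \<open>Source condition phi = (T*T)^beta T* psi, written through the spectral
  calculus of the compact self-adjoint operator T*T: for every eigenpair
  (lambda, e) of T*T, <phi, e> = lambda^beta <T* psi, e>.\<close>

definition source_cond :: "real \<Rightarrow> real \<Rightarrow> (real \<Rightarrow> real) \<Rightarrow> real \<Rightarrow> (real \<Rightarrow> real) \<Rightarrow> (real \<Rightarrow> real) \<Rightarrow> bool" where
  "source_cond a b f \<beta> \<phi> \<psi> \<longleftrightarrow>
     (\<forall>lam e. e \<in> L2ab a b \<and> norm2 a b e > 0 \<and>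
        (\<forall>z\<in>{a..b}. Tadj a b f (Top a b f e) z = lam * e z) \<longrightarrow>
        inner2 a b \<phi> e = lam powr \<beta> * inner2 a b (Tadj a b f \<psi>) e)"

definition source_class :: "real \<Rightarrow> real \<Rightarrow> real \<Rightarrow> real \<Rightarrow> real \<Rightarrow> (real \<Rightarrow> real) \<Rightarrow> (real \<Rightarrow> real) \<Rightarrow> bool" where
  "source_class a b M \<beta> C \<phi> f \<longleftrightarrow>
     continuous_on {a..b} \<phi> \<and> supnorm a b \<phi> \<le> M \<and>
     (\<forall>\<psi>\<in>L2ab a b. continuous_on {a..b} (Tadj a b f \<psi>)) \<and>
     bdd_above ((\<lambda>\<psi>. supnorm a b (Tadj a b f \<psi>)) ` {\<psi>\<in>L2ab a b. norm2 a b \<psi> \<le> 1}) \<and>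
     (\<exists>\<psi>\<in>L2ab a b. source_cond a b f \<beta> \<phi> \<psi> \<and>
        max (opnorm_2inf a b (Tadj a b f)) (max (norm2 a b \<psi>) (inverse (opnorm_2 a b (Top a b f)))) \<le> C)"

definition centered_gaussian_process ::
  "'b measure \<Rightarrow> real set \<Rightarrow> (real \<Rightarrow> 'b \<Rightarrow> real) \<Rightarrow> (real \<Rightarrow> real \<Rightarrow> real) \<Rightarrow> bool" where
  "centered_gaussian_process N I G Cov \<longleftrightarrow> prob_space N \<and>
     (\<forall>t\<in>I. G t \<in> borel_measurable N) \<and>
     (\<forall>(m::nat) (ts::nat \<Rightarrow> real) (c::nat \<Rightarrow> real). (\<forall>j<m. ts j \<in> I) \<longrightarrow>
        (let v = (\<Sum>j<m. \<Sum>k<m. c j * c k * Cov (ts j) (ts k)) in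
          if v > 0 then distributed N lborel (\<lambda>\<omega>. \<Sum>j<m. c j * G (ts j) \<omega>) (normal_density 0 (sqrt v))
          else (AE \<omega> in N. (\<Sum>j<m. c j * G (ts j) \<omega>) = 0)))"

definition nu_eps :: "real \<Rightarrow> real \<Rightarrow> (real \<Rightarrow> real) \<Rightarrow> real \<Rightarrow> nat \<Rightarrow> (nat \<Rightarrow> 'a \<Rightarrow> real) \<Rightarrow> (nat \<Rightarrow> 'a \<Rightarrow> real) \<Rightarrow> 'a \<Rightarrow> (real \<Rightarrow> real)" where
  "nu_eps a b f \<alpha> n Y \<epsilon> \<omega> = resolvent a b f \<alpha> (\<lambda>z. (1 / real n) * (\<Sum>i<n. \<epsilon> i \<omega> * f (Y i \<omega> - z)))"

definition q_ci :: "real \<Rightarrow> real \<Rightarrow> (real \<Rightarrow> real) \<Rightarrow> real \<Rightarrow> real \<Rightarrow> nat \<Rightarrow> (nat \<Rightarrow> 'a \<Rightarrow> real) \<Rightarrow> (nat \<Rightarrow> 'a \<Rightarrow> real) \<Rightarrow> 'a \<Rightarrow> real" where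
  "q_ci a b f \<gamma> \<alpha> n Y \<epsilon> \<omega> =
     2 * supnorm a b (nu_eps a b f \<alpha> n Y \<epsilon> \<omega>) +
     3 * supnorm a b f * (opnorm_2inf a b (Tadj a b f) / 2 + sqrt \<alpha>) * sqrt (2 * ln (2 / \<gamma>))
       / (\<alpha> powr (3/2) * sqrt (real n))"

definition sup_quantile :: "'b measure \<Rightarrow> real \<Rightarrow> real \<Rightarrow> (real \<Rightarrow> 'b \<Rightarrow> real) \<Rightarrow> real \<Rightarrow> real" where
  "sup_quantile N a b G \<gamma> =
     Inf {x. measure N {\<omega>\<in>space N. (SUP t\<in>{a..b}. \<bar>G t \<omega>\<bar>) \<le> x} \<ge> 1 - \<gamma>}"

definition q_g :: "'b measure \<Rightarrow> (real \<Rightarrow> 'b \<Rightarrow> real) \<Rightarrow> real \<Rightarrow> real \<Rightarrow> (real \<Rightarrow> real) \<Rightarrow> real \<Rightarrow> real \<Rightarrow> nat \<Rightarrow> real" where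
  "q_g N G a b f \<gamma> \<alpha> n =
     sup_quantile N a b G \<gamma> * (opnorm_2inf a b (Tadj a b f) / 2 + sqrt \<alpha>) / (\<alpha> powr (3/2) * sqrt (real n))"

end

theory Submission
  imports Defs
begin

(* On continuous functions the Tikhonov resolvent h = (alpha I + T*T)^-1 g can be built as a
   damped Neumann series.  Testing its equation against h gives |T h|^2 <= |h| |g| - alpha |h|^2,
   hence |T h| <= |g| / (2 sqrt alpha) in L2 and, pointwise,
   |h z| <= (|g z| + M sqrt (b - a) |g| / (2 sqrt alpha)) / alpha.
   For the multiplier mean g = n^-1 sum_i eps_i f(Y_i - .), Hoeffding's inequality on a grid of
   mesh n^-m with m s >= 1, combined with the Hoelder continuity of f, gives
   E sup|g| = O(sqrt (log n / n)), and independence gives E |g|_2 = O(n^-1/2).  The rate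
   assumption keeps alpha_n log n bounded, so E sup|nu| = O(alpha_n^-3/2 n^-1/2).  All other
   terms of the two quantiles are deterministic and of this order since alpha_n -> 0. *)

lemma hoelder_imp_continuous_on:
  fixes F :: "real \<Rightarrow> real"
  assumes "s > 0" "L \<ge> 0" "\<And>x y. \<bar>F x - F y\<bar> \<le> L * \<bar>x - y\<bar> powr s"
  shows "continuous_on UNIV F"
proof -
  have "isCont F x" for x
  proof -
    have "(\<lambda>y. L * \<bar>y - x\<bar> powr s) \<midarrow>x\<rightarrow> L * \<bar>x - x\<bar> powr s"
      using assms(1) by (intro tendsto_intros continuous_intros) auto
    then have t: "(\<lambda>y. L * \<bar>y - x\<bar> powr s) \<midarrow>x\<rightarrow> 0" using assms(1) by simp
    have b: "- (L * \<bar>y - x\<bar> powr s) \<le> F y - F x \<and> F y - F x \<le> L * \<bar>y - x\<bar> powr s" for y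
      using assms(3)[of y x] by linarith
    have t2: "(\<lambda>y. - (L * \<bar>y - x\<bar> powr s)) \<midarrow>x\<rightarrow> 0" using tendsto_minus[OF t] by simp
    have "(\<lambda>y. F y - F x) \<midarrow>x\<rightarrow> 0"
      by (rule tendsto_sandwich[OF _ _ t2 t]) (use b in \<open>auto intro!: always_eventually\<close>)
    then show ?thesis unfolding isCont_def using LIM_zero_cancel by blast
  qed
  then show ?thesis by (simp add: continuous_at_imp_continuous_on)
qed

lemma eq_0_if_abs_le_geometric:
  fixes x q C :: real
  assumes "0 \<le> q" "q < 1" "\<And>k. \<bar>x\<bar> \<le> C * q ^ k"
  shows "x = 0"
proof -
  have "(\<lambda>k. C * q ^ k) \<longlonglongrightarrow> C * 0"
    using assms by (intro tendsto_mult tendsto_const LIMSEQ_power_zero) auto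
  then have "\<bar>x\<bar> \<le> C * 0" by (rule tendsto_lowerbound) (use assms in auto)
  then show ?thesis by simp
qed

lemma continuous_on_Icc_abs_bound:
  fixes g :: "real \<Rightarrow> real"
  assumes "continuous_on {a..b} g"
  obtains G where "0 \<le> G" "\<And>z. z \<in> {a..b} \<Longrightarrow> \<bar>g z\<bar> \<le> G"
proof -
  have "bounded (g ` {a..b})" by (intro compact_imp_bounded compact_continuous_image assms) auto
  then obtain G where "G > 0" "\<And>y. y \<in> g ` {a..b} \<Longrightarrow> norm y \<le> G" by (auto simp: bounded_pos)
  then show ?thesis using that[of G] by auto
qed

lemma geometric_dominated_series:
  fixes r :: "nat \<Rightarrow> real \<Rightarrow> real"
  assumes cont: "\<And>k. continuous_on S (r k)" and q: "0 \<le> q" "q < 1"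
    and dom: "\<And>k z. z \<in> S \<Longrightarrow> \<bar>r k z\<bar> \<le> A * q ^ k"
  shows "continuous_on S (\<lambda>z. \<Sum>j. r j z)"
    and "z \<in> S \<Longrightarrow> \<bar>(\<Sum>j. r j z) - (\<Sum>j<k. r j z)\<bar> \<le> A / (1 - q) * q ^ k"
proof -
  have summ: "summable (\<lambda>j. A * q ^ j)" using q by (intro summable_mult summable_geometric) auto
  have ul: "uniform_limit S (\<lambda>n z. \<Sum>j<n. r j z) (\<lambda>z. \<Sum>j. r j z) sequentially"
    by (rule Weierstrass_m_test[OF _ summ]) (use dom in auto)
  show "continuous_on S (\<lambda>z. \<Sum>j. r j z)"
    by (rule uniform_limit_theorem[OF _ ul]) (auto intro!: always_eventually continuous_intros cont)
  assume z: "z \<in> S"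
  have summr: "summable (\<lambda>j. r j z)"
    by (rule summable_comparison_test[OF _ summ]) (use dom z in auto)
  have s2: "summable (\<lambda>j. A * q ^ (j + k))"
    using summ summable_iff_shift[where f="\<lambda>j. A * q ^ j" and k=k] by simp
  have s3: "summable (\<lambda>j. \<bar>r (j + k) z\<bar>)"
    by (rule summable_comparison_test[OF _ s2]) (use dom z in auto)
  have "(\<Sum>j. r j z) - (\<Sum>j<k. r j z) = (\<Sum>j. r (j + k) z)"
    using suminf_split_initial_segment[OF summr, of k] by simp
  also have "\<bar>\<dots>\<bar> \<le> (\<Sum>j. \<bar>r (j + k) z\<bar>)" by (rule summable_rabs[OF s3])
  also have "\<dots> \<le> (\<Sum>j. A * q ^ (j + k))" by (rule suminf_le[OF _ s3 s2]) (use dom z in auto)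
  also have "\<dots> = A * q ^ k * (\<Sum>j. q ^ j)"
    by (subst suminf_mult[symmetric]) (use q in \<open>auto simp: power_add mult_ac intro!: summable_geometric\<close>)
  also have "\<dots> = A / (1 - q) * q ^ k" using q by (simp add: suminf_geometric)
  finally show "\<bar>(\<Sum>j. r j z) - (\<Sum>j<k. r j z)\<bar> \<le> A / (1 - q) * q ^ k" .
qed

lemma Icc_grid_point_near:
  fixes a b z :: real
  assumes ab: "a < b" and N: "0 < N" and z: "z \<in> {a..b}"
  shows "\<exists>j\<le>N. \<bar>z - (a + real j * ((b - a) / real N))\<bar> \<le> (b - a) / real N"
proof -
  define \<delta> where "\<delta> = (b - a) / real N"
  have \<delta>: "0 < \<delta>" unfolding \<delta>_def using ab N by simp
  define x where "x = (z - a) / \<delta>"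
  have x0: "0 \<le> x" unfolding x_def using z \<delta> by simp
  have xN: "x \<le> real N" unfolding x_def \<delta>_def using z ab N by (simp add: field_simps)
  define j where "j = nat \<lfloor>x\<rfloor>"
  have j1: "real j \<le> x" "x < real j + 1" unfolding j_def using x0 by linarith+
  have jN: "j \<le> N" using j1 xN by linarith
  have "z - (a + real j * \<delta>) = \<delta> * (x - real j)" unfolding x_def using \<delta> by (simp add: field_simps)
  then have "\<bar>z - (a + real j * \<delta>)\<bar> \<le> \<delta>" using j1 \<delta> by (simp add: abs_mult)
  then show ?thesis using jN unfolding \<delta>_def by blast
qed

lemma continuous_supported_Icc_endpoints:
  fixes f :: "real \<Rightarrow> real"
  assumes c: "continuous_on UNIV f" and z: "\<forall>y. y \<notin> {a..b} \<longrightarrow> f y = 0"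
  shows "f b = 0" "f a = 0"
proof -
  have t1: "(f \<longlongrightarrow> f b) (at_right b)"
    using c by (meson UNIV_I continuous_on_def tendsto_within_subset subset_UNIV)
  have t2: "(f \<longlongrightarrow> 0) (at_right b)"
    by (rule tendsto_eventually) (use z in \<open>auto simp: eventually_at_right_field intro!: exI[of _ "b + 1"]\<close>)
  show "f b = 0" using tendsto_unique[OF _ t1 t2] by simp
  have t3: "(f \<longlongrightarrow> f a) (at_left a)"
    using c by (meson UNIV_I continuous_on_def tendsto_within_subset subset_UNIV)
  have t4: "(f \<longlongrightarrow> 0) (at_left a)"
    by (rule tendsto_eventually) (use z in \<open>auto simp: eventually_at_left_field intro!: exI[of _ "a - 1"]\<close>)
  show "f a = 0" using tendsto_unique[OF _ t3 t4] by simp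
qed

lemma hoelder_on_Icc_extend_zero:
  fixes f :: "real \<Rightarrow> real"
  assumes ab: "a \<le> b" and M0: "0 \<le> M" and s: "0 \<le> s" and c: "continuous_on UNIV f"
    and z: "\<forall>y. y \<notin> {a..b} \<longrightarrow> f y = 0"
    and hh: "\<forall>x\<in>{a..b}. \<forall>y\<in>{a..b}. \<bar>f x - f y\<bar> \<le> M * \<bar>x - y\<bar> powr s"
  shows "\<bar>f x - f y\<bar> \<le> M * \<bar>x - y\<bar> powr s"
proof -
  have fa0: "f a = 0" and fb0: "f b = 0" using continuous_supported_Icc_endpoints[OF c z] by auto
  have inside_outside: "\<bar>f x - f y\<bar> \<le> M * \<bar>x - y\<bar> powr s" if x: "x \<in> {a..b}" and y: "y \<notin> {a..b}" for x y
  proof -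
    define e where "e = (if y > b then b else a)"
    have "e \<in> {a..b}" "\<bar>x - e\<bar> \<le> \<bar>x - y\<bar>" "f e = 0" using x y ab fa0 fb0 by (auto simp: e_def)
    then have "\<bar>f x - f y\<bar> = \<bar>f x - f e\<bar>" "M * \<bar>x - e\<bar> powr s \<le> M * \<bar>x - y\<bar> powr s"
      using z y M0 s by (auto intro!: mult_left_mono powr_mono2)
    with hh x \<open>e \<in> {a..b}\<close> show ?thesis by fastforce
  qed
  show ?thesis
  proof (cases "x \<in> {a..b}"; cases "y \<in> {a..b}")
    assume "x \<in> {a..b}" "y \<in> {a..b}" then show ?thesis using hh by auto
  next
    assume "x \<in> {a..b}" "y \<notin> {a..b}" then show ?thesis by (rule inside_outside)
  next
    assume "x \<notin> {a..b}" "y \<in> {a..b}" then show ?thesis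
      using inside_outside[of y x] by (simp add: abs_minus_commute)
  next
    assume "x \<notin> {a..b}" "y \<notin> {a..b}" then show ?thesis using z M0 by simp
  qed
qed

lemma eventually_mult_ln_le:
  fixes \<alpha> :: "nat \<Rightarrow> real"
  assumes a0: "\<forall>n. 0 < \<alpha> n" and a1: "\<alpha> \<longlonglongrightarrow> 0"
    and a2: "(\<lambda>n. \<alpha> n powr (3/2 + min \<beta> 1) * sqrt (real n)) \<longlonglongrightarrow> 0"
  shows "eventually (\<lambda>n. \<alpha> n * ln (real n) \<le> 5) sequentially"
proof -
  have e1: "eventually (\<lambda>n. \<alpha> n < 1) sequentially" using order_tendstoD(2)[OF a1] by simp
  have e2: "eventually (\<lambda>n. \<alpha> n powr (3/2 + min \<beta> 1) * sqrt (real n) < 1) sequentially"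
    using order_tendstoD(2)[OF a2] by simp
  have e3: "eventually (\<lambda>n. 1 \<le> n) sequentially" by (rule eventually_ge_at_top)
  show ?thesis using e1 e2 e3
  proof eventually_elim
    case (elim n)
    define x where "x = \<alpha> n"
    have x0: "0 < x" "x \<le> 1" using a0 elim unfolding x_def by auto
    have n1: "1 \<le> real n" using elim by simp
    have "x powr (5/2) \<le> x powr (3/2 + min \<beta> 1)" using x0 by (intro powr_mono') auto
    then have "x powr (5/2) * sqrt (real n) \<le> x powr (3/2 + min \<beta> 1) * sqrt (real n)"
      by (rule mult_right_mono) simp
    then have "x powr (5/2) * sqrt (real n) < 1" using elim(2) unfolding x_def by linarith
    then have "x powr (5/2) \<le> 1 / sqrt (real n)" using n1 by (simp add: field_simps)
    also have "\<dots> = real n powr (- (1/2))" using n1 by (simp only: powr_minus_divide powr_half_sqrt)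
    finally have h1: "x powr (5/2) \<le> real n powr (- (1/2))" .
    have "x = (x powr (5/2)) powr (2/5)" using x0 by (simp add: powr_powr)
    also have "\<dots> \<le> (real n powr (- (1/2))) powr (2/5)" by (rule powr_mono2) (use h1 in auto)
    also have "\<dots> = real n powr (- (1/5))" by (simp add: powr_powr)
    finally have hx: "x \<le> real n powr (- (1/5))" .
    have lnn: "0 \<le> ln (real n)" using n1 by simp
    have "ln (real n) = 5 * ln (real n powr (1/5))" using n1 by (simp add: ln_powr)
    also have "\<dots> \<le> 5 * real n powr (1/5)" using n1 by (intro mult_left_mono ln_bound) auto
    finally have hl: "ln (real n) \<le> 5 * real n powr (1/5)" .
    have "x * ln (real n) \<le> real n powr (- (1/5)) * ln (real n)" by (rule mult_right_mono[OF hx lnn])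
    also have "\<dots> \<le> real n powr (- (1/5)) * (5 * real n powr (1/5))" by (intro mult_left_mono hl) auto
    also have "\<dots> = 5 * (real n powr (- (1/5)) * real n powr (1/5))" by simp
    also have "real n powr (- (1/5)) * real n powr (1/5) = 1" using n1 by (simp add: powr_add[symmetric])
    finally show ?case unfolding x_def by simp
  qed
qed

lemma mult_ln_grid_size_le:
  fixes \<alpha> :: real
  assumes \<alpha>: "0 < \<alpha>" "\<alpha> \<le> 1" and n: "1 \<le> n" and \<alpha>_ln: "\<alpha> * ln (real n) \<le> 5"
  shows "\<alpha> * ln (2 * (real (n ^ m) + 1) * real n) \<le> ln 4 + 5 * (real m + 1)"
proof -
  have "2 * (real (n ^ m) + 1) * real n \<le> 2 * (2 * real (n ^ m)) * real n"
    using n by (intro mult_right_mono mult_left_mono) auto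
  also have "\<dots> = 4 * real n ^ (m + 1)" by simp
  finally have "ln (2 * (real (n ^ m) + 1) * real n) \<le> ln (4 * real n ^ (m + 1))"
    using n by (intro ln_mono) (auto intro!: mult_pos_pos add_nonneg_pos)
  also have "\<dots> = ln 4 + (real m + 1) * ln (real n)" using n by (simp add: ln_mult ln_realpow algebra_simps)
  finally have "ln (2 * (real (n ^ m) + 1) * real n) \<le> ln 4 + (real m + 1) * ln (real n)" .
  then have "\<alpha> * ln (2 * (real (n ^ m) + 1) * real n) \<le> \<alpha> * (ln 4 + (real m + 1) * ln (real n))"
    using \<alpha> by (intro mult_left_mono) auto
  also have "\<dots> = \<alpha> * ln 4 + (real m + 1) * (\<alpha> * ln (real n))" by (simp add: algebra_simps)
  also have "\<dots> \<le> 1 * ln 4 + (real m + 1) * 5"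
    using \<alpha> \<alpha>_ln by (intro add_mono mult_left_mono mult_right_mono) auto
  finally show ?thesis by simp
qed

lemma (in finite_measure) integrable_bounded:
  "(X :: 'a \<Rightarrow> real) \<in> borel_measurable M \<Longrightarrow> (\<And>\<omega>. \<bar>X \<omega>\<bar> \<le> B) \<Longrightarrow> integrable M X"
  by (rule integrable_const_bound[where B=B]) auto

lemma (in prob_space) expectation_le_plus_indicator:
  fixes X :: "'a \<Rightarrow> real"
  assumes X: "integrable M X" and A: "A \<in> events"
    and bound: "\<And>\<omega>. \<omega> \<in> space M \<Longrightarrow> X \<omega> \<le> c + d * indicator A \<omega>"
  shows "expectation X \<le> c + d * prob A"
proof -
  have ind: "integrable M (indicator A :: 'a \<Rightarrow> real)" using A by (simp add: emeasure_eq_measure)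
  have "expectation X \<le> expectation (\<lambda>\<omega>. c + d * indicator A \<omega>)"
    by (rule integral_mono_AE[OF X]) (use ind bound in auto)
  also have "\<dots> = c + d * prob A" using ind A by (simp add: prob_space)
  finally show ?thesis .
qed

lemma convergent_mult_bigo:
  assumes "(u \<longlongrightarrow> c) F" and "eventually (\<lambda>x. g x \<noteq> 0) F"
  shows "(\<lambda>x. u x * g x) \<in> O[F](g)"
proof (rule bigoI_tendsto)
  show "((\<lambda>x. u x * g x / g x) \<longlongrightarrow> c) F"
    by (rule Lim_transform_eventually[OF assms(1)]) (use assms(2) in \<open>auto elim: eventually_mono\<close>)
qed (fact assms(2))

lemma eventually_rate_nonzero:
  fixes \<alpha> :: "nat \<Rightarrow> real"
  assumes "\<And>n. 0 < \<alpha> n"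
  shows "eventually (\<lambda>n. 1 / (\<alpha> n powr (3/2) * sqrt (real n)) \<noteq> 0) sequentially"
  using eventually_ge_at_top[of 1]
proof eventually_elim
  case (elim n)
  then show ?case using assms[of n] by simp
qed

section \<open>Convolution with a bounded Hoelder kernel on \<open>C[a,b]\<close>\<close>

locale hoelder_kernel =
  fixes a b M s :: real and f :: "real \<Rightarrow> real"
  assumes ab: "a < b" and s0: "0 < s" and M0: "0 < M"
  assumes f_cont: "continuous_on UNIV f"
  assumes f_bound: "\<And>y. \<bar>f y\<bar> \<le> M"
  assumes f_hoelder: "\<And>x y. \<bar>f x - f y\<bar> \<le> M * \<bar>x - y\<bar> powr s"
begin

text \<open>\<open>conv\<close>, \<open>conv_adj\<close> and \<open>gram\<close> are \<open>T\<close>, \<open>T*\<close> and \<open>T*T\<close> written with the gauge integral,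
  which is convenient on continuous functions; \<open>Top_eq_conv\<close> and \<open>Tadj_eq_conv_adj\<close> below
  identify them with \<open>Top\<close> and \<open>Tadj\<close> there.\<close>

definition conv :: "(real \<Rightarrow> real) \<Rightarrow> real \<Rightarrow> real" where
  "conv u y = integral {a..b} (\<lambda>z. u z * f (y - z))"
definition conv_adj :: "(real \<Rightarrow> real) \<Rightarrow> real \<Rightarrow> real" where
  "conv_adj v z = integral {a..b} (\<lambda>y. v y * f (y - z))"
definition gram :: "(real \<Rightarrow> real) \<Rightarrow> real \<Rightarrow> real" where
  "gram u = conv_adj (conv u)"
definition inner_ab :: "(real \<Rightarrow> real) \<Rightarrow> (real \<Rightarrow> real) \<Rightarrow> real" where
  "inner_ab u v = integral {a..b} (\<lambda>x. u x * v x)"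
definition norm_ab :: "(real \<Rightarrow> real) \<Rightarrow> real" where
  "norm_ab u = sqrt (inner_ab u u)"
definition L1_norm :: "(real \<Rightarrow> real) \<Rightarrow> real" where
  "L1_norm u = integral {a..b} (\<lambda>x. \<bar>u x\<bar>)"

lemma abs_mult_f_le: "\<bar>c\<bar> * \<bar>f y\<bar> \<le> M * \<bar>c\<bar>"
  using mult_left_mono[OF f_bound[of y], of "\<bar>c\<bar>"] by (simp add: mult.commute)

lemma continuous_on_f_comp[continuous_intros]: "continuous_on S g \<Longrightarrow> continuous_on S (\<lambda>x. f (g x))"
  using continuous_on_compose2[OF f_cont] by blast

lemma continuous_on_conv_integrand: "continuous_on {a..b} (u::real\<Rightarrow>real) \<Longrightarrow> continuous_on {a..b} (\<lambda>z. u z * f (y - z))"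
  by (intro continuous_intros) auto
lemma continuous_on_conv_adj_integrand: "continuous_on {a..b} (v::real\<Rightarrow>real) \<Longrightarrow> continuous_on {a..b} (\<lambda>y. v y * f (y - z))"
  by (intro continuous_intros) auto

lemma L1_norm_nonneg: "continuous_on {a..b} u \<Longrightarrow> 0 \<le> L1_norm u"
  unfolding L1_norm_def by (intro integral_nonneg integrable_continuous_real continuous_intros) auto

lemma inner_ab_self_nonneg: "continuous_on {a..b} u \<Longrightarrow> 0 \<le> inner_ab u u"
  unfolding inner_ab_def by (intro integral_nonneg integrable_continuous_real continuous_intros) auto

lemma abs_integral_le_integral:
  fixes u c :: "real \<Rightarrow> real"
  assumes "continuous_on {a..b} u" "\<And>x. x \<in> {a..b} \<Longrightarrow> \<bar>u x\<bar> \<le> c x" "continuous_on {a..b} c"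
  shows "\<bar>integral {a..b} u\<bar> \<le> integral {a..b} c"
  using integral_norm_bound_integral[OF integrable_continuous_real[OF assms(1)] integrable_continuous_real[OF assms(3)]] assms(2) by auto

lemma abs_conv_le: "continuous_on {a..b} u \<Longrightarrow> \<bar>conv u y\<bar> \<le> M * L1_norm u"
proof -
  assume u: "continuous_on {a..b} u"
  have "\<bar>conv u y\<bar> \<le> integral {a..b} (\<lambda>z. M * \<bar>u z\<bar>)"
    unfolding conv_def
    by (rule abs_integral_le_integral[OF continuous_on_conv_integrand[OF u]])
       (use f_bound M0 in \<open>auto simp: abs_mult abs_mult_f_le intro!: continuous_intros u\<close>)
  then show ?thesis by (simp add: L1_norm_def)
qed

lemma abs_conv_adj_le: "continuous_on {a..b} u \<Longrightarrow> \<bar>conv_adj u y\<bar> \<le> M * L1_norm u"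
proof -
  assume u: "continuous_on {a..b} u"
  have "\<bar>conv_adj u y\<bar> \<le> integral {a..b} (\<lambda>z. M * \<bar>u z\<bar>)"
    unfolding conv_adj_def
    by (rule abs_integral_le_integral[OF continuous_on_conv_adj_integrand[OF u]])
       (use f_bound M0 in \<open>auto simp: abs_mult abs_mult_f_le intro!: continuous_intros u\<close>)
  then show ?thesis by (simp add: L1_norm_def)
qed

lemma conv_hoelder: "continuous_on {a..b} u \<Longrightarrow> \<bar>conv u y - conv u y'\<bar> \<le> (M * L1_norm u) * \<bar>y - y'\<bar> powr s"
proof -
  assume u: "continuous_on {a..b} u"
  have "conv u y - conv u y' = integral {a..b} (\<lambda>z. u z * (f (y - z) - f (y' - z)))"
    unfolding conv_def by (subst integral_diff[symmetric]) (auto intro!: integrable_continuous_real continuous_on_conv_integrand u simp: algebra_simps)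
  also have "\<bar>\<dots>\<bar> \<le> integral {a..b} (\<lambda>z. \<bar>u z\<bar> * (M * \<bar>y - y'\<bar> powr s))"
  proof (rule abs_integral_le_integral)
    show "continuous_on {a..b} (\<lambda>z. u z * (f (y - z) - f (y' - z)))" by (intro continuous_intros u)
    show "continuous_on {a..b} (\<lambda>z. \<bar>u z\<bar> * (M * \<bar>y - y'\<bar> powr s))" by (intro continuous_intros u)
    fix z show "\<bar>u z * (f (y - z) - f (y' - z))\<bar> \<le> \<bar>u z\<bar> * (M * \<bar>y - y'\<bar> powr s)"
      using f_hoelder[of "y - z" "y' - z"] by (simp add: abs_mult mult_left_mono)
  qed
  also have "\<dots> = (M * L1_norm u) * \<bar>y - y'\<bar> powr s"
    by (simp add: L1_norm_def mult.commute mult.left_commute)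
  finally show ?thesis .
qed

lemma conv_adj_hoelder: "continuous_on {a..b} u \<Longrightarrow> \<bar>conv_adj u y - conv_adj u y'\<bar> \<le> (M * L1_norm u) * \<bar>y - y'\<bar> powr s"
proof -
  assume u: "continuous_on {a..b} u"
  have "conv_adj u y - conv_adj u y' = integral {a..b} (\<lambda>z. u z * (f (z - y) - f (z - y')))"
    unfolding conv_adj_def by (subst integral_diff[symmetric]) (auto intro!: integrable_continuous_real continuous_on_conv_adj_integrand u simp: algebra_simps)
  also have "\<bar>\<dots>\<bar> \<le> integral {a..b} (\<lambda>z. \<bar>u z\<bar> * (M * \<bar>y - y'\<bar> powr s))"
  proof (rule abs_integral_le_integral)
    show "continuous_on {a..b} (\<lambda>z. u z * (f (z - y) - f (z - y')))" by (intro continuous_intros u)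
    show "continuous_on {a..b} (\<lambda>z. \<bar>u z\<bar> * (M * \<bar>y - y'\<bar> powr s))" by (intro continuous_intros u)
    fix z show "\<bar>u z * (f (z - y) - f (z - y'))\<bar> \<le> \<bar>u z\<bar> * (M * \<bar>y - y'\<bar> powr s)"
      using f_hoelder[of "z - y" "z - y'"] by (simp add: abs_mult mult_left_mono abs_minus_commute)
  qed
  also have "\<dots> = (M * L1_norm u) * \<bar>y - y'\<bar> powr s"
    by (simp add: L1_norm_def mult.commute mult.left_commute)
  finally show ?thesis .
qed

lemma continuous_on_conv: "continuous_on {a..b} u \<Longrightarrow> continuous_on S (conv u)"
  using hoelder_imp_continuous_on[OF s0 _ conv_hoelder] L1_norm_nonneg M0 continuous_on_subset
  by (metis mult_nonneg_nonneg less_imp_le subset_UNIV)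
lemma continuous_on_conv_adj: "continuous_on {a..b} u \<Longrightarrow> continuous_on S (conv_adj u)"
  using hoelder_imp_continuous_on[OF s0 _ conv_adj_hoelder] L1_norm_nonneg M0 continuous_on_subset
  by (metis mult_nonneg_nonneg less_imp_le subset_UNIV)
lemma continuous_on_gram: "continuous_on {a..b} u \<Longrightarrow> continuous_on S (gram u)"
  unfolding gram_def by (intro continuous_on_conv_adj continuous_on_conv)

lemma conv_cong: "(\<And>z. z \<in> {a..b} \<Longrightarrow> u z = u' z) \<Longrightarrow> conv u = conv u'"
  unfolding conv_def by (intro ext integral_cong) auto
lemma conv_adj_cong: "(\<And>z. z \<in> {a..b} \<Longrightarrow> u z = u' z) \<Longrightarrow> conv_adj u = conv_adj u'"
  unfolding conv_adj_def by (intro ext integral_cong) auto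
lemma gram_cong: "(\<And>z. z \<in> {a..b} \<Longrightarrow> u z = u' z) \<Longrightarrow> gram u = gram u'"
  unfolding gram_def by (metis conv_cong)

lemma conv_add: "continuous_on {a..b} u \<Longrightarrow> continuous_on {a..b} v \<Longrightarrow>
   conv (\<lambda>z. u z + v z) y = conv u y + conv v y"
  unfolding conv_def by (subst integral_add[symmetric]) (auto intro!: integrable_continuous_real continuous_on_conv_integrand simp: algebra_simps)
lemma conv_cmult: "conv (\<lambda>z. c * u z) y = c * conv u y"
  unfolding conv_def by (subst integral_mult_right[symmetric]) (simp add: mult.assoc)
lemma conv_adj_add: "continuous_on {a..b} u \<Longrightarrow> continuous_on {a..b} v \<Longrightarrow>
   conv_adj (\<lambda>z. u z + v z) y = conv_adj u y + conv_adj v y"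
  unfolding conv_adj_def by (subst integral_add[symmetric]) (auto intro!: integrable_continuous_real continuous_on_conv_adj_integrand simp: algebra_simps)
lemma conv_adj_cmult: "conv_adj (\<lambda>z. c * u z) y = c * conv_adj u y"
  unfolding conv_adj_def by (subst integral_mult_right[symmetric]) (simp add: mult.assoc)

lemma gram_add: "continuous_on {a..b} u \<Longrightarrow> continuous_on {a..b} v \<Longrightarrow>
   gram (\<lambda>z. u z + v z) y = gram u y + gram v y"
  unfolding gram_def by (simp add: conv_add conv_adj_add[symmetric] continuous_on_conv cong: conv_adj_cong)
lemma gram_cmult: "gram (\<lambda>z. c * u z) y = c * gram u y"
proof -
  have "conv (\<lambda>z. c * u z) = (\<lambda>y. c * conv u y)" by (rule ext, rule conv_cmult)
  then show ?thesis unfolding gram_def by (simp add: conv_adj_cmult)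
qed
lemma gram_lincomb: "continuous_on {a..b} u \<Longrightarrow> continuous_on {a..b} v \<Longrightarrow>
   gram (\<lambda>z. c * u z + d * v z) y = c * gram u y + d * gram v y"
  by (subst gram_add) (auto intro!: continuous_intros simp: gram_cmult)

lemma gram_sum: "finite S \<Longrightarrow> (\<And>j. j \<in> S \<Longrightarrow> continuous_on {a..b} (u j)) \<Longrightarrow>
   gram (\<lambda>z. \<Sum>j\<in>S. c j * u j z) y = (\<Sum>j\<in>S. c j * gram (u j) y)"
proof (induction S rule: finite_induct)
  case empty
  have "gram (\<lambda>z. 0 * 0) y = 0 * gram (\<lambda>z. 0) y" by (rule gram_cmult)
  then show ?case by simp
next
  case (insert x F)
  have "gram (\<lambda>z. \<Sum>j\<in>insert x F. c j * u j z) y = gram (\<lambda>z. c x * u x z + 1 * (\<Sum>j\<in>F. c j * u j z)) y"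
    using insert by simp
  also have "\<dots> = c x * gram (u x) y + 1 * gram (\<lambda>z. \<Sum>j\<in>F. c j * u j z) y"
    using insert by (intro gram_lincomb) (auto intro!: continuous_intros)
  finally show ?case using insert by simp
qed

lemma inner_ab_cong: "(\<And>z. z \<in> {a..b} \<Longrightarrow> u z = u' z) \<Longrightarrow> (\<And>z. z \<in> {a..b} \<Longrightarrow> v z = v' z) \<Longrightarrow> inner_ab u v = inner_ab u' v'"
  unfolding inner_ab_def by (intro integral_cong) auto

lemma integral_lincomb3:
  fixes F G H :: "real \<Rightarrow> real"
  assumes "continuous_on {a..b} F" "continuous_on {a..b} G" "continuous_on {a..b} H"
  shows "integral {a..b} (\<lambda>x. p * F x + q * G x + r * H x) = p * integral {a..b} F + q * integral {a..b} G + r * integral {a..b} H"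
  using assms by (simp add: integral_add integral_mult_right integrable_continuous_real continuous_intros)

lemma inner_ab_quadratic:
  fixes u v :: "real \<Rightarrow> real"
  assumes "continuous_on {a..b} u" "continuous_on {a..b} v"
  shows "inner_ab (\<lambda>x. p * u x + q * v x) (\<lambda>x. p * u x + q * v x) = p\<^sup>2 * inner_ab u u + (2*p*q) * inner_ab u v + q\<^sup>2 * inner_ab v v"
proof -
  have "inner_ab (\<lambda>x. p * u x + q * v x) (\<lambda>x. p * u x + q * v x) =
     integral {a..b} (\<lambda>x. p\<^sup>2 * (u x * u x) + (2*p*q) * (u x * v x) + q\<^sup>2 * (v x * v x))"
    unfolding inner_ab_def by (intro integral_cong) (simp add: algebra_simps power2_eq_square)
  also have "\<dots> = p\<^sup>2 * inner_ab u u + (2*p*q) * inner_ab u v + q\<^sup>2 * inner_ab v v"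
    unfolding inner_ab_def by (rule integral_lincomb3) (use assms in \<open>auto intro!: continuous_intros\<close>)
  finally show ?thesis .
qed

lemma inner_ab_Cauchy_Schwarz_sq:
  fixes u v :: "real \<Rightarrow> real"
  assumes u: "continuous_on {a..b} u" and v: "continuous_on {a..b} v"
  shows "(inner_ab u v)\<^sup>2 \<le> inner_ab u u * inner_ab v v"
proof -
  have q: "0 \<le> t\<^sup>2 * inner_ab u u + (2*t*(-1)) * inner_ab u v + (-1)\<^sup>2 * inner_ab v v" for t
  proof -
    have "continuous_on {a..b} (\<lambda>x. t * u x + (-1) * v x)" by (intro continuous_intros u v)
    from inner_ab_self_nonneg[OF this] show ?thesis unfolding inner_ab_quadratic[OF u v, of t "-1"] .
  qed
  show ?thesis
  proof (cases "inner_ab u u = 0")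
    case True
    have "inner_ab u v = 0"
    proof (rule ccontr)
      assume ne: "inner_ab u v \<noteq> 0"
      have "0 \<le> (2*((inner_ab v v + 1)/(2 * inner_ab u v))*(-1)) * inner_ab u v + inner_ab v v"
        using q[of "(inner_ab v v + 1)/(2 * inner_ab u v)"] True by simp
      also have "\<dots> = -1" using ne by (simp add: field_simps)
      finally show False by simp
    qed
    then show ?thesis using True by simp
  next
    case False
    then have pos: "inner_ab u u > 0" using inner_ab_self_nonneg[OF u] by simp
    have "0 \<le> (inner_ab u v / inner_ab u u)\<^sup>2 * inner_ab u u + (2*(inner_ab u v / inner_ab u u)*(-1)) * inner_ab u v + inner_ab v v"
      using q[of "inner_ab u v / inner_ab u u"] by simp
    also have "\<dots> = inner_ab v v - (inner_ab u v)\<^sup>2 / inner_ab u u" using pos by (simp add: field_simps power2_eq_square)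
    finally show ?thesis using pos by (simp add: field_simps)
  qed
qed

lemma inner_ab_Cauchy_Schwarz: "continuous_on {a..b} u \<Longrightarrow> continuous_on {a..b} v \<Longrightarrow> \<bar>inner_ab u v\<bar> \<le> norm_ab u * norm_ab v"
proof -
  assume u: "continuous_on {a..b} u" and v: "continuous_on {a..b} v"
  have "\<bar>inner_ab u v\<bar> = sqrt ((inner_ab u v)\<^sup>2)" by simp
  also have "\<dots> \<le> sqrt (inner_ab u u * inner_ab v v)" by (rule real_sqrt_le_mono[OF inner_ab_Cauchy_Schwarz_sq[OF u v]])
  also have "\<dots> = norm_ab u * norm_ab v" by (simp add: norm_ab_def real_sqrt_mult)
  finally show ?thesis .
qed

lemma inner_ab_one: "inner_ab (\<lambda>x. 1) (\<lambda>x. 1) = b - a"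
  using ab by (simp add: inner_ab_def)

lemma norm_ab_nonneg: "continuous_on {a..b} u \<Longrightarrow> 0 \<le> norm_ab u" unfolding norm_ab_def using inner_ab_self_nonneg by simp

lemma L1_norm_le_norm_ab: "continuous_on {a..b} u \<Longrightarrow> L1_norm u \<le> sqrt (b - a) * norm_ab u"
proof -
  assume u: "continuous_on {a..b} u"
  have "L1_norm u = inner_ab (\<lambda>x. \<bar>u x\<bar>) (\<lambda>x. 1)" by (simp add: L1_norm_def inner_ab_def)
  also have "\<dots> \<le> norm_ab (\<lambda>x. \<bar>u x\<bar>) * norm_ab (\<lambda>x. 1)"
  proof -
    have c: "continuous_on {a..b} (\<lambda>x. \<bar>u x\<bar>)" by (intro continuous_intros u)
    have "continuous_on {a..b} (\<lambda>x::real. 1::real)" by simp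
    from inner_ab_Cauchy_Schwarz[OF c this] show ?thesis by linarith
  qed
  also have "norm_ab (\<lambda>x. \<bar>u x\<bar>) = norm_ab u" by (simp add: norm_ab_def inner_ab_def)
  also have "norm_ab (\<lambda>x. 1) = sqrt (b - a)" by (simp add: norm_ab_def inner_ab_one)
  finally show ?thesis by (simp add: mult.commute)
qed

lemma L1_norm_le_sup: "continuous_on {a..b} u \<Longrightarrow> (\<And>x. x \<in> {a..b} \<Longrightarrow> \<bar>u x\<bar> \<le> B) \<Longrightarrow> L1_norm u \<le> (b - a) * B"
proof -
  assume u: "continuous_on {a..b} u" and B: "\<And>x. x \<in> {a..b} \<Longrightarrow> \<bar>u x\<bar> \<le> B"
  have "L1_norm u \<le> integral {a..b} (\<lambda>x. B)"
    unfolding L1_norm_def by (rule integral_le) (use B u in \<open>auto intro!: integrable_continuous_real continuous_intros\<close>)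
  then show ?thesis using ab by simp
qed

lemma norm_ab_le_sup: "continuous_on {a..b} u \<Longrightarrow> (\<And>x. x \<in> {a..b} \<Longrightarrow> \<bar>u x\<bar> \<le> B) \<Longrightarrow> norm_ab u \<le> sqrt (b - a) * B"
proof -
  assume u: "continuous_on {a..b} u" and B: "\<And>x. x \<in> {a..b} \<Longrightarrow> \<bar>u x\<bar> \<le> B"
  have B0: "0 \<le> B" using B[of a] ab by auto
  have "inner_ab u u \<le> integral {a..b} (\<lambda>x. B\<^sup>2)"
    unfolding inner_ab_def
  proof (rule integral_le)
    fix x assume "x \<in> {a..b}"
    then show "u x * u x \<le> B\<^sup>2" using B[of x] B0
      by (metis abs_ge_zero abs_mult_self_eq mult_mono power2_eq_square)
  qed (use u in \<open>auto intro!: integrable_continuous_real continuous_intros\<close>)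
  then have "inner_ab u u \<le> (b - a) * B\<^sup>2" using ab by simp
  then have "norm_ab u \<le> sqrt ((b - a) * B\<^sup>2)" unfolding norm_ab_def by simp
  also have "\<dots> = sqrt (b - a) * B" using B0 by (simp add: real_sqrt_mult)
  finally show ?thesis .
qed

lemma inner_ab_conv_adjoint:
  fixes u v :: "real \<Rightarrow> real"
  assumes u: "continuous_on {a..b} u" and v: "continuous_on {a..b} v"
  shows "inner_ab v (conv u) = inner_ab u (conv_adj v)"
proof -
  have c: "continuous_on (cbox (a,a) (b,b)) (\<lambda>(y,z). v y * (u z * f (y - z)))"
  proof -
    have "cbox (a,a) (b,b) = {a..b} \<times> {a..b}" by (simp add: cbox_Pair_eq)
    moreover have "continuous_on ({a..b} \<times> {a..b}) (\<lambda>p. v (fst p) * (u (snd p) * f (fst p - snd p)))"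
      by (intro continuous_intros continuous_on_compose2[OF v] continuous_on_compose2[OF u]) auto
    ultimately show ?thesis by (simp add: case_prod_beta)
  qed
  have "inner_ab v (conv u) = integral {a..b} (\<lambda>y. integral {a..b} (\<lambda>z. v y * (u z * f (y - z))))"
    unfolding inner_ab_def conv_def by (simp only: integral_mult_right)
  also have "\<dots> = integral {a..b} (\<lambda>z. integral {a..b} (\<lambda>y. v y * (u z * f (y - z))))"
    using integral_swap_continuous[OF c] by simp
  also have "\<dots> = integral {a..b} (\<lambda>z. u z * integral {a..b} (\<lambda>y. v y * f (y - z)))"
  proof (rule integral_cong)
    fix z
    have "integral {a..b} (\<lambda>y. v y * (u z * f (y - z))) = integral {a..b} (\<lambda>y. u z * (v y * f (y - z)))"
      by (rule integral_cong) (simp add: algebra_simps)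
    then show "integral {a..b} (\<lambda>y. v y * (u z * f (y - z))) = u z * integral {a..b} (\<lambda>y. v y * f (y - z))"
      by (simp only: integral_mult_right)
  qed
  also have "\<dots> = inner_ab u (conv_adj v)"
    unfolding inner_ab_def conv_adj_def ..
  finally show ?thesis .
qed

section \<open>Solving the Tikhonov equation by a Neumann series\<close>

definition gram_bound :: real where "gram_bound = M\<^sup>2 * (b - a)\<^sup>2"

lemma gram_bound_nonneg: "0 \<le> gram_bound" unfolding gram_bound_def by simp

lemma abs_gram_le_norm_conv: "continuous_on {a..b} r \<Longrightarrow> \<bar>gram r z\<bar> \<le> M * sqrt (b - a) * norm_ab (conv r)"
proof -
  assume r: "continuous_on {a..b} r"
  have "\<bar>gram r z\<bar> \<le> M * L1_norm (conv r)" unfolding gram_def by (rule abs_conv_adj_le[OF continuous_on_conv[OF r]])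
  also have "\<dots> \<le> M * (sqrt (b - a) * norm_ab (conv r))"
    using L1_norm_le_norm_ab[OF continuous_on_conv[OF r]] M0 by (simp add: mult_left_mono)
  finally show ?thesis by (simp add: mult.assoc)
qed

lemma inner_ab_conv_conv: "continuous_on {a..b} r \<Longrightarrow> inner_ab (conv r) (conv r) = inner_ab r (gram r)"
  unfolding gram_def by (rule inner_ab_conv_adjoint) (auto intro: continuous_on_conv)

lemma abs_gram_le_sup: "continuous_on {a..b} w \<Longrightarrow> (\<And>x. x \<in> {a..b} \<Longrightarrow> \<bar>w x\<bar> \<le> B) \<Longrightarrow> \<bar>gram w z\<bar> \<le> M\<^sup>2 * (b - a)\<^sup>2 * B"
proof -
  assume w: "continuous_on {a..b} w" and B: "\<And>x. x \<in> {a..b} \<Longrightarrow> \<bar>w x\<bar> \<le> B"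
  have l1: "L1_norm w \<le> (b - a) * B" by (rule L1_norm_le_sup[OF w B])
  have "\<bar>gram w z\<bar> \<le> M * L1_norm (conv w)" unfolding gram_def by (rule abs_conv_adj_le[OF continuous_on_conv[OF w]])
  also have "L1_norm (conv w) \<le> (b - a) * (M * L1_norm w)"
    by (rule L1_norm_le_sup[OF continuous_on_conv[OF w]]) (rule abs_conv_le[OF w])
  also have "\<dots> \<le> (b - a) * (M * ((b - a) * B))"
    using l1 M0 ab by (intro mult_left_mono) auto
  finally show ?thesis using M0 by (simp add: power2_eq_square mult_ac mult_left_mono)
qed

lemma abs_gram_le_norm_ab: "continuous_on {a..b} w \<Longrightarrow> \<bar>gram w z\<bar> \<le> M\<^sup>2 * (b - a) * sqrt (b - a) * norm_ab w"
proof -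
  assume w: "continuous_on {a..b} w"
  have "\<bar>gram w z\<bar> \<le> M * L1_norm (conv w)" unfolding gram_def by (rule abs_conv_adj_le[OF continuous_on_conv[OF w]])
  also have "L1_norm (conv w) \<le> (b - a) * (M * L1_norm w)"
    by (rule L1_norm_le_sup[OF continuous_on_conv[OF w]]) (rule abs_conv_le[OF w])
  also have "\<dots> \<le> (b - a) * (M * (sqrt (b - a) * norm_ab w))"
    using L1_norm_le_norm_ab[OF w] M0 ab by (intro mult_left_mono) auto
  finally show ?thesis using M0 by (simp add: power2_eq_square mult_ac mult_left_mono)
qed

lemma landweber_step_contracts:
  assumes r: "continuous_on {a..b} r" and t: "0 < \<tau>" "\<tau> * (2 * \<alpha> + gram_bound) \<le> 2" "\<tau> * \<alpha> \<le> 1"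
  shows "inner_ab (\<lambda>z. (1 - \<tau> * \<alpha>) * r z + (- \<tau>) * gram r z) (\<lambda>z. (1 - \<tau> * \<alpha>) * r z + (- \<tau>) * gram r z)
          \<le> (1 - \<tau> * \<alpha>)\<^sup>2 * inner_ab r r"
proof -
  have Kc: "continuous_on {a..b} (gram r)" by (rule continuous_on_gram[OF r])
  define P where "P = inner_ab r (gram r)"
  have P0: "0 \<le> P" unfolding P_def using inner_ab_conv_conv[OF r] inner_ab_self_nonneg[OF continuous_on_conv[OF r]] by simp
  have sq: "(gram r z)\<^sup>2 \<le> M\<^sup>2 * (b - a) * P" for z
  proof -
    have "\<bar>gram r z\<bar> \<le> M * sqrt (b - a) * norm_ab (conv r)" by (rule abs_gram_le_norm_conv[OF r])
    then have "(gram r z)\<^sup>2 \<le> (M * sqrt (b - a) * norm_ab (conv r))\<^sup>2"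
      by (metis abs_ge_zero abs_le_square_iff abs_of_nonneg order_trans power2_abs)
    also have "\<dots> = M\<^sup>2 * (b - a) * P"
      using ab inner_ab_self_nonneg[OF continuous_on_conv[OF r]] inner_ab_conv_conv[OF r]
      by (simp add: P_def norm_ab_def power_mult_distrib)
    finally show ?thesis .
  qed
  have Q: "inner_ab (gram r) (gram r) \<le> gram_bound * P"
  proof -
    have "inner_ab (gram r) (gram r) \<le> integral {a..b} (\<lambda>x. M\<^sup>2 * (b - a) * P)"
      unfolding inner_ab_def by (rule integral_le) (use sq Kc in \<open>auto simp: power2_eq_square intro!: integrable_continuous_real continuous_intros\<close>)
    then show ?thesis using ab by (simp add: gram_bound_def power2_eq_square mult_ac)
  qed
  have e: "inner_ab (\<lambda>z. (1 - \<tau> * \<alpha>) * r z + (- \<tau>) * gram r z) (\<lambda>z. (1 - \<tau> * \<alpha>) * r z + (- \<tau>) * gram r z)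
     = (1 - \<tau> * \<alpha>)\<^sup>2 * inner_ab r r + ((2 * (1 - \<tau> * \<alpha>) * (- \<tau>)) * P + \<tau>\<^sup>2 * inner_ab (gram r) (gram r))"
    unfolding P_def by (subst inner_ab_quadratic[OF r Kc]) simp
  have "(2 * (1 - \<tau> * \<alpha>) * (- \<tau>)) * P + \<tau>\<^sup>2 * inner_ab (gram r) (gram r) \<le> (2 * (1 - \<tau> * \<alpha>) * (- \<tau>)) * P + \<tau>\<^sup>2 * (gram_bound * P)"
    using Q t by (intro add_left_mono mult_left_mono) auto
  also have "(2 * (1 - \<tau> * \<alpha>) * (- \<tau>)) * P + \<tau>\<^sup>2 * (gram_bound * P) = \<tau> * P * (\<tau> * (2 * \<alpha> + gram_bound) - 2)"
    by (simp add: algebra_simps power2_eq_square)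
  also have "\<dots> \<le> 0" using t P0 by (intro mult_nonneg_nonpos) auto
  finally show ?thesis unfolding e by linarith
qed

definition landweber_step :: "real \<Rightarrow> real" where
  "landweber_step \<alpha> = 1 / (\<alpha> + gram_bound + 1)"

text \<open>With \<open>\<tau> = landweber_step \<alpha>\<close>, the iterates are \<open>r\<^sub>k = -(I - \<tau> (\<alpha> I + T*T))\<^sup>k g\<close>,
  so that \<open>-\<tau> \<Sum>\<^sub>k r\<^sub>k\<close> is the Neumann series of \<open>(\<alpha> I + T*T)\<^sup>-\<^sup>1 g\<close>.\<close>

definition landweber_iter :: "real \<Rightarrow> (real \<Rightarrow> real) \<Rightarrow> nat \<Rightarrow> real \<Rightarrow> real" where
  "landweber_iter \<alpha> g k =
     ((\<lambda>w z. (1 - landweber_step \<alpha> * \<alpha>) * w z - landweber_step \<alpha> * gram w z) ^^ k) (\<lambda>z. - g z)"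

lemma landweber_step_bounds:
  assumes "0 < \<alpha>"
  shows "0 < landweber_step \<alpha>" "landweber_step \<alpha> * (2 * \<alpha> + gram_bound) \<le> 2"
    "landweber_step \<alpha> * \<alpha> < 1"
  unfolding landweber_step_def using assms gram_bound_nonneg by (auto simp: field_simps)

lemma landweber_iter_0: "landweber_iter \<alpha> g 0 = (\<lambda>z. - g z)"
  by (simp add: landweber_iter_def)

lemma landweber_iter_Suc:
  "landweber_iter \<alpha> g (Suc k) = (\<lambda>z. (1 - landweber_step \<alpha> * \<alpha>) * landweber_iter \<alpha> g k z
      - landweber_step \<alpha> * gram (landweber_iter \<alpha> g k) z)"
  by (simp add: landweber_iter_def)

lemma continuous_on_landweber_iter:
  "continuous_on {a..b} g \<Longrightarrow> continuous_on {a..b} (landweber_iter \<alpha> g k)"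
  by (induction k) (auto simp: landweber_iter_0 landweber_iter_Suc intro!: continuous_intros continuous_on_gram)

lemma norm_ab_landweber_iter_le:
  assumes \<alpha>: "0 < \<alpha>" and g: "continuous_on {a..b} g"
  shows "norm_ab (landweber_iter \<alpha> g k) \<le> (1 - landweber_step \<alpha> * \<alpha>) ^ k * norm_ab g"
proof -
  define \<tau> where "\<tau> = landweber_step \<alpha>"
  define r where "r = landweber_iter \<alpha> g"
  note \<tau> = landweber_step_bounds[OF \<alpha>, folded \<tau>_def]
  have rc: "continuous_on {a..b} (r k)" for k unfolding r_def by (rule continuous_on_landweber_iter[OF g])
  have sq: "inner_ab (r k) (r k) \<le> ((1 - \<tau> * \<alpha>) ^ k)\<^sup>2 * inner_ab g g" for k
  proof (induction k)
    case 0 show ?case by (simp add: r_def landweber_iter_0 inner_ab_def)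
  next
    case (Suc k)
    have "inner_ab (r (Suc k)) (r (Suc k)) \<le> (1 - \<tau> * \<alpha>)\<^sup>2 * inner_ab (r k) (r k)"
      unfolding r_def landweber_iter_Suc \<tau>_def[symmetric]
      using landweber_step_contracts[OF rc \<tau>(1,2)] \<tau>(3) by (simp add: r_def)
    also have "\<dots> \<le> (1 - \<tau> * \<alpha>)\<^sup>2 * (((1 - \<tau> * \<alpha>) ^ k)\<^sup>2 * inner_ab g g)"
      by (intro mult_left_mono Suc) auto
    finally show ?case by (simp add: power2_eq_square algebra_simps)
  qed
  have "norm_ab (r k) \<le> sqrt (((1 - \<tau> * \<alpha>) ^ k)\<^sup>2 * inner_ab g g)"
    unfolding norm_ab_def by (rule real_sqrt_le_mono[OF sq])
  also have "\<dots> = (1 - \<tau> * \<alpha>) ^ k * norm_ab g" using \<tau> by (simp add: real_sqrt_mult norm_ab_def)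
  finally show ?thesis unfolding r_def \<tau>_def .
qed

lemma abs_landweber_iter_Suc_le:
  assumes \<alpha>: "0 < \<alpha>" and g: "continuous_on {a..b} g"
  defines "q \<equiv> 1 - landweber_step \<alpha> * \<alpha>"
  shows "\<bar>landweber_iter \<alpha> g (Suc k) z\<bar> \<le> q * \<bar>landweber_iter \<alpha> g k z\<bar>
           + q ^ k * (landweber_step \<alpha> * (M\<^sup>2 * (b - a) * sqrt (b - a)) * norm_ab g)"
proof -
  define \<tau> where "\<tau> = landweber_step \<alpha>"
  define r where "r = landweber_iter \<alpha> g"
  note \<tau> = landweber_step_bounds[OF \<alpha>, folded \<tau>_def]
  have q0: "0 \<le> q" unfolding q_def \<tau>_def[symmetric] using \<tau> by simp
  have "\<bar>gram (r k) z\<bar> \<le> M\<^sup>2 * (b - a) * sqrt (b - a) * norm_ab (r k)"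
    unfolding r_def by (rule abs_gram_le_norm_ab[OF continuous_on_landweber_iter[OF g]])
  also have "\<dots> \<le> M\<^sup>2 * (b - a) * sqrt (b - a) * (q ^ k * norm_ab g)"
    unfolding r_def q_def using ab by (intro mult_left_mono norm_ab_landweber_iter_le[OF \<alpha> g]) auto
  finally have "\<tau> * \<bar>gram (r k) z\<bar> \<le> q ^ k * (\<tau> * (M\<^sup>2 * (b - a) * sqrt (b - a)) * norm_ab g)"
    using \<tau> by (simp add: mult_left_mono mult_ac)
  moreover have "\<bar>r (Suc k) z\<bar> \<le> q * \<bar>r k z\<bar> + \<tau> * \<bar>gram (r k) z\<bar>"
    unfolding r_def landweber_iter_Suc q_def \<tau>_def[symmetric]
    using q0 \<tau> abs_triangle_ineq4[of "q * r k z" "\<tau> * gram (r k) z"]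
    by (simp add: abs_mult q_def \<tau>_def r_def)
  ultimately show ?thesis unfolding r_def \<tau>_def by linarith
qed

text \<open>The \<open>L\<^sup>2\<close> decay rate \<open>q\<close> is transferred to the sup norm at any slower rate \<open>q' > q\<close>,
  because \<open>T*T\<close> maps \<open>L\<^sup>2\<close> boundedly into the sup norm.\<close>

lemma landweber_iter_geometric:
  assumes \<alpha>: "0 < \<alpha>" and g: "continuous_on {a..b} g"
  obtains A q' where "0 \<le> q'" "q' < 1"
    "\<And>k z. z \<in> {a..b} \<Longrightarrow> \<bar>landweber_iter \<alpha> g k z\<bar> \<le> A * q' ^ k"
proof -
  define q where "q = 1 - landweber_step \<alpha> * \<alpha>"
  define D where "D = landweber_step \<alpha> * (M\<^sup>2 * (b - a) * sqrt (b - a)) * norm_ab g"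
  have q0: "0 \<le> q" "q < 1" unfolding q_def using landweber_step_bounds[OF \<alpha>] \<alpha> by auto
  have D0: "0 \<le> D"
    unfolding D_def using landweber_step_bounds(1)[OF \<alpha>] norm_ab_nonneg[OF g] ab by simp
  define q' where "q' = (1 + q) / 2"
  have q'0: "q \<le> q'" "q' < 1" "0 \<le> q'" "0 < q' - q" unfolding q'_def using q0 by auto
  obtain G where G: "0 \<le> G" "\<And>z. z \<in> {a..b} \<Longrightarrow> \<bar>g z\<bar> \<le> G"
    using continuous_on_Icc_abs_bound[OF g] by blast
  define A where "A = max G (D / (q' - q))"
  have A1: "D \<le> (q' - q) * A"
  proof -
    have "D / (q' - q) \<le> A" unfolding A_def by simp
    then show ?thesis using q'0 by (simp add: field_simps)
  qed
  have "\<bar>landweber_iter \<alpha> g k z\<bar> \<le> A * q' ^ k" if "z \<in> {a..b}" for k z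
  proof (induction k)
    case 0 show ?case using G(2)[OF that] by (simp add: landweber_iter_0 A_def le_max_iff_disj)
  next
    case (Suc k)
    have "\<bar>landweber_iter \<alpha> g (Suc k) z\<bar> \<le> q * \<bar>landweber_iter \<alpha> g k z\<bar> + q ^ k * D"
      using abs_landweber_iter_Suc_le[OF \<alpha> g] unfolding q_def D_def .
    also have "\<dots> \<le> q * (A * q' ^ k) + q' ^ k * ((q' - q) * A)"
      using Suc.IH q0 q'0 D0 A1 by (intro add_mono mult_left_mono mult_mono power_mono) auto
    finally show ?case by (simp add: algebra_simps)
  qed
  with q'0 show ?thesis using that by blast
qed

lemma landweber_partial_sum_residual:
  "\<alpha> * (- landweber_step \<alpha> * (\<Sum>j<k. landweber_iter \<alpha> g j z))
     + (\<Sum>j<k. (- landweber_step \<alpha>) * gram (landweber_iter \<alpha> g j) z) - g z = landweber_iter \<alpha> g k z"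
  by (induction k) (simp_all add: landweber_iter_0 landweber_iter_Suc algebra_simps)

lemma resolvent_equation_of_approximations:
  assumes \<alpha>: "0 \<le> \<alpha>" and hc: "continuous_on {a..b} h" and hkc: "\<And>k. continuous_on {a..b} (hk k)"
    and q: "0 \<le> q" "q < 1"
    and close: "\<And>k x. x \<in> {a..b} \<Longrightarrow> \<bar>h x - hk k x\<bar> \<le> C * q ^ k"
    and residual: "\<And>k x. x \<in> {a..b} \<Longrightarrow> \<bar>\<alpha> * hk k x + gram (hk k) x - g x\<bar> \<le> C * q ^ k"
    and z: "z \<in> {a..b}"
  shows "\<alpha> * h z + gram h z = g z"
proof -
  have "\<bar>\<alpha> * h z + gram h z - g z\<bar> \<le> ((\<alpha> + M\<^sup>2 * (b - a)\<^sup>2) * C + C) * q ^ k" for k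
  proof -
    have "gram h z - gram (hk k) z = gram (\<lambda>x. 1 * h x + (-1) * hk k x) z"
      by (subst gram_lincomb[OF hc hkc]) simp
    also have "\<bar>\<dots>\<bar> \<le> M\<^sup>2 * (b - a)\<^sup>2 * (C * q ^ k)"
      by (rule abs_gram_le_sup) (use close in \<open>auto intro!: continuous_intros hc hkc\<close>)
    finally have "\<bar>gram h z - gram (hk k) z\<bar> \<le> M\<^sup>2 * (b - a)\<^sup>2 * (C * q ^ k)" .
    moreover have "\<bar>\<alpha> * (h z - hk k z)\<bar> \<le> \<alpha> * (C * q ^ k)"
      using close[OF z, of k] \<alpha> by (simp add: abs_mult mult_left_mono)
    moreover note residual[OF z, of k]
    ultimately show ?thesis by (simp add: algebra_simps abs_le_iff)
  qed
  then have "\<alpha> * h z + gram h z - g z = 0" by (rule eq_0_if_abs_le_geometric[OF q])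
  then show ?thesis by simp
qed

lemma resolvent_equation_solvable:
  assumes \<alpha>: "0 < \<alpha>" and g: "continuous_on {a..b} g"
  shows "\<exists>h. continuous_on {a..b} h \<and> (\<forall>z\<in>{a..b}. \<alpha> * h z + gram h z = g z)"
proof -
  define \<tau> where "\<tau> = landweber_step \<alpha>"
  define r where "r = landweber_iter \<alpha> g"
  note \<tau> = landweber_step_bounds[OF \<alpha>, folded \<tau>_def]
  have rc: "continuous_on {a..b} (r k)" for k unfolding r_def by (rule continuous_on_landweber_iter[OF g])
  obtain A q where q: "0 \<le> q" "q < 1" and rsup: "\<And>k z. z \<in> {a..b} \<Longrightarrow> \<bar>r k z\<bar> \<le> A * q ^ k"
    by (rule landweber_iter_geometric[OF \<alpha> g, folded r_def]) (rule that)
  have series: "continuous_on {a..b} (\<lambda>z. \<Sum>j. r j z)"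
      "\<And>k z. z \<in> {a..b} \<Longrightarrow> \<bar>(\<Sum>j. r j z) - (\<Sum>j<k. r j z)\<bar> \<le> A / (1 - q) * q ^ k"
    using geometric_dominated_series[where S="{a..b}" and r=r and q=q and A=A] rc q rsup by blast+
  define h where "h z = - \<tau> * (\<Sum>j. r j z)" for z
  define hk where "hk k z = - \<tau> * (\<Sum>j<k. r j z)" for k z
  define C where "C = max (\<tau> * (A / (1 - q))) A"
  have hc: "continuous_on {a..b} h" unfolding h_def by (intro continuous_intros series(1))
  have hkc: "continuous_on {a..b} (hk k)" for k unfolding hk_def by (intro continuous_intros rc)
  have close: "\<bar>h x - hk k x\<bar> \<le> C * q ^ k" if "x \<in> {a..b}" for k x
  proof -
    have "\<bar>h x - hk k x\<bar> = \<tau> * \<bar>(\<Sum>j. r j x) - (\<Sum>j<k. r j x)\<bar>"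
      using \<tau> by (simp add: h_def hk_def abs_mult flip: right_diff_distrib)
    also have "\<dots> \<le> \<tau> * (A / (1 - q) * q ^ k)" using series(2)[OF that, of k] \<tau> by (intro mult_left_mono) auto
    also have "\<dots> = \<tau> * (A / (1 - q)) * q ^ k" by simp
    also have "\<dots> \<le> C * q ^ k" unfolding C_def using q by (intro mult_right_mono) auto
    finally show ?thesis .
  qed
  have "gram (hk k) x = (\<Sum>j<k. (- \<tau>) * gram (r j) x)" for k x
    unfolding hk_def sum_distrib_left by (rule gram_sum) (auto intro: rc)
  then have "\<alpha> * hk k x + gram (hk k) x - g x = r k x" for k x
    using landweber_partial_sum_residual[of \<alpha> g x k] by (simp add: hk_def r_def \<tau>_def)
  then have residual: "\<bar>\<alpha> * hk k x + gram (hk k) x - g x\<bar> \<le> C * q ^ k" if "x \<in> {a..b}" for k x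
    using rsup[OF that, of k] mult_right_mono[of A C "q ^ k"] q by (simp add: C_def)
  show ?thesis
    using resolvent_equation_of_approximations[OF _ hc hkc q close residual] \<alpha> hc by auto
qed

section \<open>The resolvent on continuous functions\<close>

lemma abs_mult_f_diff_le: "\<bar>c\<bar> * \<bar>f x - f y\<bar> \<le> M * \<bar>x - y\<bar> powr s * \<bar>c\<bar>"
  using mult_left_mono[OF f_hoelder[of x y], of "\<bar>c\<bar>"] by (simp add: mult.commute)

lemma Top_eq_conv: "continuous_on {a..b} u \<Longrightarrow> Top a b f u = conv u"
proof (rule ext)
  fix y assume u: "continuous_on {a..b} u"
  have "set_integrable lborel {a..b} (\<lambda>z. u z * f (y - z))"
    by (rule borel_integrable_atLeastAtMost'[OF continuous_on_conv_integrand[OF u]])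
  then show "Top a b f u y = conv u y"
    unfolding Top_def conv_def by (rule set_borel_integral_eq_integral)
qed

lemma Tadj_eq_conv_adj: "continuous_on {a..b} u \<Longrightarrow> Tadj a b f u = conv_adj u"
proof (rule ext)
  fix y assume u: "continuous_on {a..b} u"
  have "set_integrable lborel {a..b} (\<lambda>z. u z * f (z - y))"
    by (rule borel_integrable_atLeastAtMost'[OF continuous_on_conv_adj_integrand[OF u]])
  then show "Tadj a b f u y = conv_adj u y"
    unfolding Tadj_def conv_adj_def by (rule set_borel_integral_eq_integral)
qed

lemma Tadj_Top_eq_gram: "continuous_on {a..b} u \<Longrightarrow> Tadj a b f (Top a b f u) = gram u"
  by (simp add: Top_eq_conv Tadj_eq_conv_adj continuous_on_conv gram_def)

lemma norm2_eq_norm_ab: "continuous_on {a..b} u \<Longrightarrow> norm2 a b u = norm_ab u"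
proof -
  assume u: "continuous_on {a..b} u"
  have "set_integrable lborel {a..b} (\<lambda>x. (u x)\<^sup>2)"
    by (rule borel_integrable_atLeastAtMost') (intro continuous_intros u)
  then have "(LINT x:{a..b}|lborel. (u x)\<^sup>2) = integral {a..b} (\<lambda>x. (u x)\<^sup>2)"
    by (rule set_borel_integral_eq_integral)
  then show ?thesis unfolding norm2_def norm_ab_def inner_ab_def by (simp add: power2_eq_square)
qed

definition zero_ext :: "(real \<Rightarrow> real) \<Rightarrow> real \<Rightarrow> real" where
  "zero_ext h = (\<lambda>z. if z \<in> {a..b} then h z else 0)"

lemma continuous_on_zero_ext: "continuous_on {a..b} h \<Longrightarrow> continuous_on {a..b} (zero_ext h)"
  unfolding zero_ext_def by (rule continuous_on_eq[of _ h]) auto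

lemma zero_ext_L2ab: "continuous_on {a..b} h \<Longrightarrow> zero_ext h \<in> L2ab a b"
proof -
  assume h: "continuous_on {a..b} h"
  have "(\<lambda>x. indicator {a..b} x *\<^sub>R h x) \<in> borel_measurable borel"
    by (rule borel_measurable_continuous_on_indicator[OF _ h]) auto
  moreover have "(\<lambda>x. indicator {a..b} x *\<^sub>R h x) = zero_ext h" by (auto simp: zero_ext_def indicator_def)
  ultimately have m: "zero_ext h \<in> borel_measurable lborel" by simp
  have "set_integrable lborel {a..b} (\<lambda>x. (zero_ext h x)\<^sup>2)"
    by (rule borel_integrable_atLeastAtMost') (intro continuous_intros continuous_on_zero_ext h)
  with m show ?thesis unfolding L2ab_def by simp
qed

lemma L2ab_integrable_abs:
  assumes "h \<in> L2ab a b"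
  shows "integrable lborel (\<lambda>z. indicator {a..b} z * \<bar>h z\<bar>)"
proof (rule Bochner_Integration.integrable_bound)
  have hm: "h \<in> borel_measurable lborel" and i2: "integrable lborel (\<lambda>x. indicator {a..b} x * (h x)\<^sup>2)"
    using assms by (auto simp: L2ab_def set_integrable_def)
  have i1: "integrable lborel (\<lambda>x. indicator {a..b} x * (1::real))"
    by (simp add: emeasure_lborel_Icc_eq)
  show "integrable lborel (\<lambda>x. indicator {a..b} x * (1::real) + indicator {a..b} x * (h x)\<^sup>2)"
    by (intro Bochner_Integration.integrable_add i1 i2)
  show "(\<lambda>z. indicator {a..b} z * \<bar>h z\<bar>) \<in> borel_measurable lborel" using hm by measurable
  show "AE x in lborel. norm (indicator {a..b} x * \<bar>h x\<bar>) \<le> norm (indicator {a..b} x * (1::real) + indicator {a..b} x * (h x)\<^sup>2)"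
  proof (intro AE_I2)
    fix x
    have "\<bar>h x\<bar> \<le> 1 + (h x)\<^sup>2"
    proof -
      have "0 \<le> (\<bar>h x\<bar> - 1)\<^sup>2" by simp
      moreover have "(\<bar>h x\<bar> - 1)\<^sup>2 = (h x)\<^sup>2 - 2 * \<bar>h x\<bar> + 1"
        by (simp add: power2_eq_square algebra_simps)
      ultimately show ?thesis by linarith
    qed
    then show "norm (indicator {a..b} x * \<bar>h x\<bar>) \<le> norm (indicator {a..b} x * (1::real) + indicator {a..b} x * (h x)\<^sup>2)"
      by (auto simp: indicator_def)
  qed
qed

lemma Top_hoelder:
  assumes h: "h \<in> L2ab a b"
  shows "\<bar>Top a b f h y - Top a b f h y'\<bar> \<le> (M * (\<integral>z. indicator {a..b} z * \<bar>h z\<bar> \<partial>lborel)) * \<bar>y - y'\<bar> powr s"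
proof -
  have hm: "h \<in> borel_measurable lborel" using h by (simp add: L2ab_def)
  have i1: "integrable lborel (\<lambda>z. indicator {a..b} z * \<bar>h z\<bar>)" by (rule L2ab_integrable_abs[OF h])
  have iy: "integrable lborel (\<lambda>z. indicator {a..b} z * (h z * f (y - z)))" for y
  proof (rule Bochner_Integration.integrable_bound)
    show "integrable lborel (\<lambda>z. M * (indicator {a..b} z * \<bar>h z\<bar>))" by (intro integrable_mult_right i1)
    show "(\<lambda>z. indicator {a..b} z * (h z * f (y - z))) \<in> borel_measurable lborel"
      using hm by (intro borel_measurable_times borel_measurable_indicator)
        (auto intro!: borel_measurable_continuous_onI continuous_intros)
    show "AE z in lborel. norm (indicator {a..b} z * (h z * f (y - z))) \<le> norm (M * (indicator {a..b} z * \<bar>h z\<bar>))"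
      using M0 abs_mult_f_le by (auto simp: indicator_def abs_mult intro!: AE_I2)
  qed
  have "Top a b f h y - Top a b f h y' = (\<integral>z. indicator {a..b} z * (h z * (f (y - z) - f (y' - z))) \<partial>lborel)"
    unfolding Top_def set_lebesgue_integral_def
    by (simp only: real_scaleR_def, subst Bochner_Integration.integral_diff[symmetric, OF iy iy]) (simp add: algebra_simps)
  also have "\<bar>\<dots>\<bar> \<le> (\<integral>z. (M * \<bar>y - y'\<bar> powr s) * (indicator {a..b} z * \<bar>h z\<bar>) \<partial>lborel)"
  proof (rule integral_abs_bound_integral)
    show "integrable lborel (\<lambda>z. indicator {a..b} z * (h z * (f (y - z) - f (y' - z))))"
      using Bochner_Integration.integrable_diff[OF iy iy] by (simp add: algebra_simps)
    show "integrable lborel (\<lambda>z. M * \<bar>y - y'\<bar> powr s * (indicator {a..b} z * \<bar>h z\<bar>))"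
      by (intro integrable_mult_right i1)
    fix z
    show "\<bar>indicator {a..b} z * (h z * (f (y - z) - f (y' - z)))\<bar> \<le> M * \<bar>y - y'\<bar> powr s * (indicator {a..b} z * \<bar>h z\<bar>)"
      using abs_mult_f_diff_le[of "h z" "y - z" "y' - z"] by (auto simp: indicator_def abs_mult)
  qed
  also have "\<dots> = (M * (\<integral>z. indicator {a..b} z * \<bar>h z\<bar> \<partial>lborel)) * \<bar>y - y'\<bar> powr s" by simp
  finally show ?thesis .
qed

lemma L2ab_continuous_on_Top:
  assumes h: "h \<in> L2ab a b"
  shows "continuous_on UNIV (Top a b f h)"
proof (rule hoelder_imp_continuous_on[OF s0 _ Top_hoelder[OF h]])
  have "0 \<le> (\<integral>z. indicator {a..b} z * \<bar>h z\<bar> \<partial>lborel)"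
    by (intro integral_nonneg_AE) (auto simp: indicator_def)
  then show "0 \<le> M * (\<integral>z. indicator {a..b} z * \<bar>h z\<bar> \<partial>lborel)" using M0 by simp
qed

lemma resolvent_equation_unique:
  assumes \<alpha>: "0 < \<alpha>" and h1: "continuous_on {a..b} h1" and h2: "continuous_on {a..b} h2"
    and e1: "\<And>z. z \<in> {a..b} \<Longrightarrow> \<alpha> * h1 z + gram h1 z = g z"
    and e2: "\<And>z. z \<in> {a..b} \<Longrightarrow> \<alpha> * h2 z + gram h2 z = g z"
  shows "\<And>z. z \<in> {a..b} \<Longrightarrow> h1 z = h2 z"
proof -
  define d where "d = (\<lambda>z. 1 * h1 z + (-1) * h2 z)"
  have d_cont: "continuous_on {a..b} d" unfolding d_def by (intro continuous_intros h1 h2)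
  have Kd: "gram d z = gram h1 z - gram h2 z" for z unfolding d_def by (subst gram_lincomb[OF h1 h2]) simp
  have ed: "gram d z = (-\<alpha>) * d z" if "z \<in> {a..b}" for z using e1[OF that] e2[OF that] Kd[of z]
    by (simp add: d_def algebra_simps)
  have "inner_ab (conv d) (conv d) = inner_ab d (gram d)" by (rule inner_ab_conv_conv[OF d_cont])
  also have "\<dots> = inner_ab d (\<lambda>z. (-\<alpha>) * d z)" by (rule inner_ab_cong) (auto simp: ed)
  also have "\<dots> = integral {a..b} (\<lambda>x. (-\<alpha>) * (d x * d x))" unfolding inner_ab_def by (rule integral_cong) (simp add: algebra_simps)
  also have "\<dots> = (-\<alpha>) * inner_ab d d" unfolding inner_ab_def by (rule integral_mult_right)
  also have "\<dots> \<le> 0" using inner_ab_self_nonneg[OF d_cont] \<alpha> by (simp add: mult_nonneg_nonneg)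
  finally have "inner_ab (conv d) (conv d) \<le> 0" .
  then have "norm_ab (conv d) = 0" using inner_ab_self_nonneg[OF continuous_on_conv[OF d_cont]] by (simp add: norm_ab_def)
  then have "gram d z = 0" for z using abs_gram_le_norm_conv[OF d_cont, of z] by simp
  then have "d z = 0" if "z \<in> {a..b}" for z using ed[OF that] \<alpha> by simp
  then show "\<And>z. z \<in> {a..b} \<Longrightarrow> h1 z = h2 z" by (simp add: d_def)
qed

definition is_resolvent :: "real \<Rightarrow> (real \<Rightarrow> real) \<Rightarrow> (real \<Rightarrow> real) \<Rightarrow> bool" where
  "is_resolvent \<alpha> g h \<longleftrightarrow> h \<in> L2ab a b \<and> (\<forall>z. z \<notin> {a..b} \<longrightarrow> h z = 0) \<and>
      (\<forall>z\<in>{a..b}. \<alpha> * h z + Tadj a b f (Top a b f h) z = g z)"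

lemma resolvent_eq_The: "resolvent a b f \<alpha> g = (THE h. is_resolvent \<alpha> g h)"
  unfolding resolvent_def is_resolvent_def ..

lemma is_resolvent_continuous:
  assumes \<alpha>: "0 < \<alpha>" and g: "continuous_on {a..b} g" and P: "is_resolvent \<alpha> g h"
  shows "continuous_on {a..b} h" "\<And>z. z \<in> {a..b} \<Longrightarrow> \<alpha> * h z + gram h z = g z"
proof -
  have hL: "h \<in> L2ab a b" and eq: "\<And>z. z \<in> {a..b} \<Longrightarrow> \<alpha> * h z + Tadj a b f (Top a b f h) z = g z"
    using P by (auto simp: is_resolvent_def)
  have tc: "continuous_on {a..b} (Top a b f h)" using L2ab_continuous_on_Top[OF hL] continuous_on_subset by blast
  have Te: "Tadj a b f (Top a b f h) = conv_adj (Top a b f h)" by (rule Tadj_eq_conv_adj[OF tc])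
  have "continuous_on {a..b} (\<lambda>z. (g z - conv_adj (Top a b f h) z) / \<alpha>)"
    by (intro continuous_intros g continuous_on_conv_adj tc) (use \<alpha> in auto)
  then show hc: "continuous_on {a..b} h"
    by (rule continuous_on_eq) (use eq \<alpha> Te in \<open>auto simp: field_simps\<close>)
  show "\<And>z. z \<in> {a..b} \<Longrightarrow> \<alpha> * h z + gram h z = g z" using eq Tadj_Top_eq_gram[OF hc] by simp
qed

lemma is_resolvent_zero_ext:
  assumes hc: "continuous_on {a..b} h" and e: "\<And>z. z \<in> {a..b} \<Longrightarrow> \<alpha> * h z + gram h z = g z"
  shows "is_resolvent \<alpha> g (zero_ext h)"
proof -
  have c0: "continuous_on {a..b} (zero_ext h)" by (rule continuous_on_zero_ext[OF hc])
  have "gram (zero_ext h) = gram h" by (rule gram_cong) (simp add: zero_ext_def)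
  then show ?thesis unfolding is_resolvent_def using zero_ext_L2ab[OF hc] e Tadj_Top_eq_gram[OF c0]
    by (auto simp: zero_ext_def)
qed

lemma is_resolvent_resolvent:
  assumes \<alpha>: "0 < \<alpha>" and g: "continuous_on {a..b} g"
  shows "is_resolvent \<alpha> g (resolvent a b f \<alpha> g)"
proof -
  obtain h where hc: "continuous_on {a..b} h" and e: "\<forall>z\<in>{a..b}. \<alpha> * h z + gram h z = g z"
    using resolvent_equation_solvable[OF \<alpha> g] by blast
  have P0: "is_resolvent \<alpha> g (zero_ext h)" by (rule is_resolvent_zero_ext[OF hc]) (use e in auto)
  have un: "h' = zero_ext h" if "is_resolvent \<alpha> g h'" for h'
  proof (rule ext)
    fix z
    show "h' z = zero_ext h z"
    proof (cases "z \<in> {a..b}")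
      case True
      have c': "continuous_on {a..b} h'" and e': "\<And>z. z \<in> {a..b} \<Longrightarrow> \<alpha> * h' z + gram h' z = g z"
        using is_resolvent_continuous[OF \<alpha> g that] by auto
      show ?thesis using resolvent_equation_unique[OF \<alpha> c' hc e'] e True by (auto simp: zero_ext_def)
    next
      case False then show ?thesis using that unfolding is_resolvent_def zero_ext_def by auto
    qed
  qed
  have "(THE h. is_resolvent \<alpha> g h) = zero_ext h" by (rule the_equality[where P="is_resolvent \<alpha> g", OF P0 un])
  then show ?thesis using P0 by (simp add: resolvent_eq_The)
qed

lemma resolvent_eqI:
  assumes \<alpha>: "0 < \<alpha>" and g: "continuous_on {a..b} g" and hc: "continuous_on {a..b} h"
    and h0: "\<And>z. z \<notin> {a..b} \<Longrightarrow> h z = 0" and e: "\<And>z. z \<in> {a..b} \<Longrightarrow> \<alpha> * h z + gram h z = g z"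
  shows "resolvent a b f \<alpha> g = h"
proof -
  have P: "is_resolvent \<alpha> g (resolvent a b f \<alpha> g)" by (rule is_resolvent_resolvent[OF \<alpha> g])
  show ?thesis
  proof (rule ext)
    fix z show "resolvent a b f \<alpha> g z = h z"
    proof (cases "z \<in> {a..b}")
      case True
      show ?thesis using resolvent_equation_unique[OF \<alpha> is_resolvent_continuous(1)[OF \<alpha> g P] hc is_resolvent_continuous(2)[OF \<alpha> g P] e] True by auto
    next
      case False then show ?thesis using P h0 by (simp add: is_resolvent_def)
    qed
  qed
qed

lemma continuous_on_resolvent: "0 < \<alpha> \<Longrightarrow> continuous_on {a..b} g \<Longrightarrow> continuous_on {a..b} (resolvent a b f \<alpha> g)"
  by (rule is_resolvent_continuous(1)[OF _ _ is_resolvent_resolvent])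
lemma resolvent_equation: "0 < \<alpha> \<Longrightarrow> continuous_on {a..b} g \<Longrightarrow> z \<in> {a..b} \<Longrightarrow>
   \<alpha> * resolvent a b f \<alpha> g z + gram (resolvent a b f \<alpha> g) z = g z"
  by (rule is_resolvent_continuous(2)[OF _ _ is_resolvent_resolvent])
lemma resolvent_outside: "0 < \<alpha> \<Longrightarrow> continuous_on {a..b} g \<Longrightarrow> z \<notin> {a..b} \<Longrightarrow> resolvent a b f \<alpha> g z = 0"
  using is_resolvent_resolvent[of \<alpha> g] by (simp add: is_resolvent_def)

lemma bdd_above_abs_continuous_on: "continuous_on {a..b} (h::real\<Rightarrow>real) \<Longrightarrow> bdd_above ((\<lambda>z. \<bar>h z\<bar>) ` {a..b})"
  by (intro bounded_imp_bdd_above compact_imp_bounded compact_continuous_image continuous_intros) auto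

lemma abs_le_supnorm: "continuous_on {a..b} h \<Longrightarrow> z \<in> {a..b} \<Longrightarrow> \<bar>h z\<bar> \<le> supnorm a b h"
  unfolding supnorm_def by (rule cSUP_upper[OF _ bdd_above_abs_continuous_on])

lemma supnorm_le: "(\<And>z. z \<in> {a..b} \<Longrightarrow> \<bar>h z\<bar> \<le> B) \<Longrightarrow> supnorm a b h \<le> B"
  unfolding supnorm_def by (rule cSUP_least) (use ab in auto)

lemma supnorm_nonneg: "continuous_on {a..b} h \<Longrightarrow> 0 \<le> supnorm a b h"
  using abs_le_supnorm[of h a] ab by auto

text \<open>Testing the resolvent equation against \<open>h\<close> gives
  \<open>|T h|\<^sup>2 = <h, g> - \<alpha> |h|\<^sup>2 \<le> |h| |g| - \<alpha> |h|\<^sup>2 \<le> |g|\<^sup>2 / (4 \<alpha>)\<close>.\<close>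

lemma norm_ab_conv_resolvent_le:
  assumes \<alpha>: "0 < \<alpha>" and g: "continuous_on {a..b} g"
  shows "norm_ab (conv (resolvent a b f \<alpha> g)) \<le> norm_ab g / (2 * sqrt \<alpha>)"
proof -
  define h where "h = resolvent a b f \<alpha> g"
  have hc: "continuous_on {a..b} h" unfolding h_def by (rule continuous_on_resolvent[OF \<alpha> g])
  have he: "\<And>z. z \<in> {a..b} \<Longrightarrow> \<alpha> * h z + gram h z = g z" unfolding h_def by (rule resolvent_equation[OF \<alpha> g])
  define x where "x = norm_ab h"
  define y where "y = norm_ab g"
  have y0: "0 \<le> y" unfolding y_def by (rule norm_ab_nonneg[OF g])
  have "inner_ab (conv h) (conv h) = inner_ab h (gram h)" by (rule inner_ab_conv_conv[OF hc])
  also have "\<dots> = inner_ab h (\<lambda>z. 1 * g z + (- \<alpha>) * h z)"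
    by (rule inner_ab_cong) (use he in \<open>auto simp: algebra_simps\<close>)
  also have "\<dots> = integral {a..b} (\<lambda>x. 1 * (h x * g x) + (-\<alpha>) * (h x * h x) + 0 * (h x * h x))"
    unfolding inner_ab_def by (intro integral_cong) (simp add: algebra_simps)
  also have "\<dots> = inner_ab h g - \<alpha> * inner_ab h h"
    unfolding inner_ab_def by (subst integral_lincomb3) (auto intro!: continuous_intros hc g)
  also have "\<dots> \<le> x * y - \<alpha> * x\<^sup>2"
    using inner_ab_Cauchy_Schwarz[OF hc g] inner_ab_self_nonneg[OF hc]
    unfolding x_def y_def norm_ab_def by simp
  also have "\<dots> \<le> y\<^sup>2 / (4 * \<alpha>)"
  proof -
    have "0 \<le> (2 * \<alpha> * x - y)\<^sup>2" by simp
    then show ?thesis using \<alpha> by (simp add: field_simps power2_eq_square algebra_simps)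
  qed
  finally have "norm_ab (conv h) \<le> sqrt (y\<^sup>2 / (4 * \<alpha>))"
    unfolding norm_ab_def by (rule real_sqrt_le_mono)
  also have "\<dots> = y / (2 * sqrt \<alpha>)" using y0 \<alpha> by (simp add: real_sqrt_divide real_sqrt_mult)
  finally show ?thesis unfolding h_def y_def .
qed

lemma abs_resolvent_le:
  assumes \<alpha>: "0 < \<alpha>" and g: "continuous_on {a..b} g" and z: "z \<in> {a..b}"
  shows "\<bar>resolvent a b f \<alpha> g z\<bar> \<le> (\<bar>g z\<bar> + M * sqrt (b - a) * norm_ab g / (2 * sqrt \<alpha>)) / \<alpha>"
proof -
  define h where "h = resolvent a b f \<alpha> g"
  have hc: "continuous_on {a..b} h" unfolding h_def by (rule continuous_on_resolvent[OF \<alpha> g])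
  have "\<bar>gram h z\<bar> \<le> M * sqrt (b - a) * norm_ab (conv h)" by (rule abs_gram_le_norm_conv[OF hc])
  also have "\<dots> \<le> M * sqrt (b - a) * (norm_ab g / (2 * sqrt \<alpha>))"
    using norm_ab_conv_resolvent_le[OF \<alpha> g] M0 ab unfolding h_def by (intro mult_left_mono) auto
  finally have "\<bar>gram h z\<bar> \<le> M * sqrt (b - a) * norm_ab g / (2 * sqrt \<alpha>)" by simp
  moreover have "g z - gram h z = \<alpha> * h z"
    using resolvent_equation[OF \<alpha> g z] unfolding h_def by simp
  then have "\<alpha> * \<bar>h z\<bar> = \<bar>g z - gram h z\<bar>" using \<alpha> by (simp add: abs_mult)
  ultimately have "\<alpha> * \<bar>h z\<bar> \<le> \<bar>g z\<bar> + M * sqrt (b - a) * norm_ab g / (2 * sqrt \<alpha>)" by linarith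
  then show ?thesis using \<alpha> unfolding h_def by (simp add: field_simps)
qed

lemma supnorm_resolvent_le:
  assumes \<alpha>: "0 < \<alpha>" and g: "continuous_on {a..b} g"
  shows "supnorm a b (resolvent a b f \<alpha> g) \<le> (supnorm a b g + M * sqrt (b - a) * norm_ab g / (2 * sqrt \<alpha>)) / \<alpha>"
proof (rule supnorm_le)
  fix z assume z: "z \<in> {a..b}"
  have "\<bar>resolvent a b f \<alpha> g z\<bar> \<le> (\<bar>g z\<bar> + M * sqrt (b - a) * norm_ab g / (2 * sqrt \<alpha>)) / \<alpha>" by (rule abs_resolvent_le[OF \<alpha> g z])
  also have "\<dots> \<le> (supnorm a b g + M * sqrt (b - a) * norm_ab g / (2 * sqrt \<alpha>)) / \<alpha>"
    using abs_le_supnorm[OF g z] \<alpha> by (intro divide_right_mono add_right_mono) auto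
  finally show "\<bar>resolvent a b f \<alpha> g z\<bar> \<le> \<dots>" .
qed

lemma resolvent_sum:
  assumes \<alpha>: "0 < \<alpha>" and S: "finite S" and G: "\<And>i. i \<in> S \<Longrightarrow> continuous_on {a..b} (G i)"
  shows "resolvent a b f \<alpha> (\<lambda>z. \<Sum>i\<in>S. c i * G i z) = (\<lambda>z. \<Sum>i\<in>S. c i * resolvent a b f \<alpha> (G i) z)"
proof (rule resolvent_eqI[OF \<alpha>])
  show "continuous_on {a..b} (\<lambda>z. \<Sum>i\<in>S. c i * G i z)" by (intro continuous_intros G)
  have Rc: "\<And>i. i \<in> S \<Longrightarrow> continuous_on {a..b} (resolvent a b f \<alpha> (G i))" by (rule continuous_on_resolvent[OF \<alpha> G])
  show "continuous_on {a..b} (\<lambda>z. \<Sum>i\<in>S. c i * resolvent a b f \<alpha> (G i) z)" by (intro continuous_intros Rc)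
  show "\<And>z. z \<notin> {a..b} \<Longrightarrow> (\<Sum>i\<in>S. c i * resolvent a b f \<alpha> (G i) z) = 0"
    using resolvent_outside[OF \<alpha> G] by simp
  fix z assume z: "z \<in> {a..b}"
  have "gram (\<lambda>z. \<Sum>i\<in>S. c i * resolvent a b f \<alpha> (G i) z) z = (\<Sum>i\<in>S. c i * gram (resolvent a b f \<alpha> (G i)) z)"
    by (rule gram_sum[OF S Rc])
  then show "\<alpha> * (\<Sum>i\<in>S. c i * resolvent a b f \<alpha> (G i) z) + gram (\<lambda>z. \<Sum>i\<in>S. c i * resolvent a b f \<alpha> (G i) z) z
      = (\<Sum>i\<in>S. c i * G i z)"
  proof -
    have e: "G i z = \<alpha> * resolvent a b f \<alpha> (G i) z + gram (resolvent a b f \<alpha> (G i)) z" if "i \<in> S" for i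
      using resolvent_equation[OF \<alpha> G[OF that] z] by simp
    have "(\<Sum>i\<in>S. c i * G i z) = (\<Sum>i\<in>S. \<alpha> * (c i * resolvent a b f \<alpha> (G i) z) + c i * gram (resolvent a b f \<alpha> (G i)) z)"
      by (rule sum.cong) (auto simp: e algebra_simps)
    then show ?thesis unfolding \<open>gram _ z = _\<close> by (simp add: sum.distrib sum_distrib_left)
  qed
qed

lemma resolvent_lincomb:
  assumes \<alpha>: "0 < \<alpha>" and u: "continuous_on {a..b} u" and v: "continuous_on {a..b} v"
  shows "resolvent a b f \<alpha> (\<lambda>z. c * u z + d * v z) = (\<lambda>z. c * resolvent a b f \<alpha> u z + d * resolvent a b f \<alpha> v z)"
proof (rule resolvent_eqI[OF \<alpha>])
  have Ru: "continuous_on {a..b} (resolvent a b f \<alpha> u)" by (rule continuous_on_resolvent[OF \<alpha> u])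
  have Rv: "continuous_on {a..b} (resolvent a b f \<alpha> v)" by (rule continuous_on_resolvent[OF \<alpha> v])
  show "continuous_on {a..b} (\<lambda>z. c * u z + d * v z)" by (intro continuous_intros u v)
  show "continuous_on {a..b} (\<lambda>z. c * resolvent a b f \<alpha> u z + d * resolvent a b f \<alpha> v z)" by (intro continuous_intros Ru Rv)
  show "\<And>z. z \<notin> {a..b} \<Longrightarrow> c * resolvent a b f \<alpha> u z + d * resolvent a b f \<alpha> v z = 0"
    using resolvent_outside[OF \<alpha> u] resolvent_outside[OF \<alpha> v] by simp
  fix z assume z: "z \<in> {a..b}"
  show "\<alpha> * (c * resolvent a b f \<alpha> u z + d * resolvent a b f \<alpha> v z) + gram (\<lambda>z. c * resolvent a b f \<alpha> u z + d * resolvent a b f \<alpha> v z) z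
     = c * u z + d * v z"
  proof -
    have e1: "u z = \<alpha> * resolvent a b f \<alpha> u z + gram (resolvent a b f \<alpha> u) z" using resolvent_equation[OF \<alpha> u z] by simp
    have e2: "v z = \<alpha> * resolvent a b f \<alpha> v z + gram (resolvent a b f \<alpha> v) z" using resolvent_equation[OF \<alpha> v z] by simp
    show ?thesis unfolding gram_lincomb[OF Ru Rv, of c d z] by (subst e1, subst e2) (simp add: algebra_simps)
  qed
qed

text \<open>By linearity \<open>\<nu>\<^sup>\<epsilon>\<^sub>2\<^sub>,\<^sub>n = n\<^sup>-\<^sup>1 \<Sum>\<^sub>i \<epsilon>\<^sub>i resolvent_kernel \<alpha> Y\<^sub>i\<close>; continuity of the kernel in \<open>y\<close>
  is what makes \<open>sup |\<nu>\<^sup>\<epsilon>\<^sub>2\<^sub>,\<^sub>n|\<close> measurable.\<close>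

definition resolvent_kernel :: "real \<Rightarrow> real \<Rightarrow> real \<Rightarrow> real" where
  "resolvent_kernel \<alpha> y z = resolvent a b f \<alpha> (\<lambda>z. f (y - z)) z"

lemma continuous_on_f_shift: "continuous_on S (\<lambda>z. f (y - z))" by (intro continuous_intros)

lemma resolvent_kernel_hoelder:
  assumes \<alpha>: "0 < \<alpha>"
  shows "\<bar>resolvent_kernel \<alpha> y z - resolvent_kernel \<alpha> y' z\<bar> \<le> ((M + M * sqrt (b - a) * (sqrt (b - a) * M) / (2 * sqrt \<alpha>)) / \<alpha>) * \<bar>y - y'\<bar> powr s"
proof (cases "z \<in> {a..b}")
  case False
  then show ?thesis using resolvent_outside[OF \<alpha> continuous_on_f_shift] M0 ab \<alpha> by (simp add: resolvent_kernel_def)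
next
  case z: True
  define g where "g = (\<lambda>z. 1 * f (y - z) + (-1) * f (y' - z))"
  have gc: "continuous_on {a..b} g" unfolding g_def by (intro continuous_intros)
  have gb: "\<bar>g x\<bar> \<le> M * \<bar>y - y'\<bar> powr s" for x using f_hoelder[of "y - x" "y' - x"] by (simp add: g_def)
  have "resolvent_kernel \<alpha> y z - resolvent_kernel \<alpha> y' z = resolvent a b f \<alpha> g z"
    unfolding resolvent_kernel_def g_def resolvent_lincomb[OF \<alpha> continuous_on_f_shift continuous_on_f_shift] by simp
  also have "\<bar>\<dots>\<bar> \<le> (\<bar>g z\<bar> + M * sqrt (b - a) * norm_ab g / (2 * sqrt \<alpha>)) / \<alpha>" by (rule abs_resolvent_le[OF \<alpha> gc z])
  also have "\<dots> \<le> (M * \<bar>y - y'\<bar> powr s + M * sqrt (b - a) * (sqrt (b - a) * (M * \<bar>y - y'\<bar> powr s)) / (2 * sqrt \<alpha>)) / \<alpha>"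
    using gb norm_ab_le_sup[OF gc gb] M0 ab \<alpha>
    by (intro divide_right_mono add_mono mult_left_mono divide_right_mono) auto
  also have "\<dots> = ((M + M * sqrt (b - a) * (sqrt (b - a) * M) / (2 * sqrt \<alpha>)) / \<alpha>) * \<bar>y - y'\<bar> powr s"
    by (simp add: field_simps)
  finally show ?thesis .
qed

lemma continuous_on_resolvent_kernel: "0 < \<alpha> \<Longrightarrow> continuous_on UNIV (\<lambda>y. resolvent_kernel \<alpha> y z)"
  by (rule hoelder_imp_continuous_on[OF s0 _ resolvent_kernel_hoelder]) (use M0 ab in auto)

lemma borel_measurable_resolvent_kernel[measurable]: "0 < \<alpha> \<Longrightarrow> (\<lambda>y. resolvent_kernel \<alpha> y z) \<in> borel_measurable borel"
  using continuous_on_resolvent_kernel borel_measurable_continuous_onI by blast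

lemma continuous_on_resolvent_kernel_arg: "0 < \<alpha> \<Longrightarrow> continuous_on {a..b} (resolvent_kernel \<alpha> y)"
  unfolding resolvent_kernel_def[abs_def] by (rule continuous_on_resolvent[OF _ continuous_on_f_shift])

definition rational_points :: "real set" where "rational_points = {a..b} \<inter> \<rat>"

lemma countable_rational_points: "countable rational_points" unfolding rational_points_def
  by (rule countable_subset[OF _ countable_rat]) auto

lemma rational_points_nonempty: "rational_points \<noteq> {}"
proof -
  obtain q where "q \<in> \<rat>" "a < q" "q < b" using Rats_dense_in_real[OF ab] by blast
  then have "q \<in> rational_points" unfolding rational_points_def by auto
  then show ?thesis by auto
qed

lemma closure_rational_points: "{a..b} \<subseteq> closure rational_points"
proof
  fix z assume z: "z \<in> {a..b}"
  show "z \<in> closure rational_points" unfolding closure_approachable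
  proof (intro allI impI)
    fix e :: real assume e: "0 < e"
    show "\<exists>y\<in>rational_points. dist y z < e"
    proof (cases "z < b")
      case True
      obtain q where "q \<in> \<rat>" "z < q" "q < min (z + e) b" using Rats_dense_in_real[of z "min (z+e) b"] True e by auto
      then show ?thesis using z by (intro bexI[of _ q]) (auto simp: rational_points_def dist_real_def)
    next
      case False
      then have zb: "z = b" using z by auto
      obtain q where "q \<in> \<rat>" "max a (b - e) < q" "q < b" using Rats_dense_in_real[of "max a (b - e)" b] ab e by auto
      then show ?thesis using zb by (intro bexI[of _ q]) (auto simp: rational_points_def dist_real_def)
    qed
  qed
qed

lemma supnorm_eq_SUP_rational_points:
  assumes h: "continuous_on {a..b} h"
  shows "supnorm a b h = (SUP z\<in>rational_points. \<bar>h z\<bar>)"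
proof (rule antisym)
  have bddD: "bdd_above ((\<lambda>z. \<bar>h z\<bar>) ` rational_points)"
    using bdd_above_abs_continuous_on[OF h] by (rule bdd_above_mono) (auto simp: rational_points_def)
  show "supnorm a b h \<le> (SUP z\<in>rational_points. \<bar>h z\<bar>)"
  proof (rule supnorm_le)
    fix z assume z: "z \<in> {a..b}"
    have cl: "closure rational_points \<subseteq> {a..b}" by (rule closure_minimal) (auto simp: rational_points_def)
    have "continuous_on (closure rational_points) (\<lambda>z. \<bar>h z\<bar>)"
      by (rule continuous_on_subset[OF _ cl]) (intro continuous_intros h)
    then show "\<bar>h z\<bar> \<le> (SUP z\<in>rational_points. \<bar>h z\<bar>)"
      by (rule continuous_le_on_closure) (use closure_rational_points z bddD in \<open>auto intro: cSUP_upper\<close>)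
  qed
  show "(SUP z\<in>rational_points. \<bar>h z\<bar>) \<le> supnorm a b h"
    unfolding supnorm_def by (rule cSUP_subset_mono[OF rational_points_nonempty bdd_above_abs_continuous_on[OF h]]) (auto simp: rational_points_def)
qed

lemma borel_measurable_supnorm:
  fixes F :: "'b \<Rightarrow> real \<Rightarrow> real"
  assumes c: "\<And>\<omega>. continuous_on {a..b} (F \<omega>)" and m: "\<And>z. (\<lambda>\<omega>. F \<omega> z) \<in> borel_measurable N"
  shows "(\<lambda>\<omega>. supnorm a b (F \<omega>)) \<in> borel_measurable N"
proof -
  have "(\<lambda>\<omega>. SUP z\<in>rational_points. \<bar>F \<omega> z\<bar>) \<in> borel_measurable N"
  proof (rule borel_measurable_cSUP[OF countable_rational_points])
    fix z show "(\<lambda>\<omega>. \<bar>F \<omega> z\<bar>) \<in> borel_measurable N" using m[of z] by measurable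
  next
    fix \<omega> show "bdd_above ((\<lambda>z. \<bar>F \<omega> z\<bar>) ` rational_points)"
      using bdd_above_abs_continuous_on[OF c] by (rule bdd_above_mono) (auto simp: rational_points_def)
  qed
  then show ?thesis by (simp add: supnorm_eq_SUP_rational_points[OF c])
qed

lemma borel_measurable_f[measurable]: "f \<in> borel_measurable borel"
  using f_cont borel_measurable_continuous_onI by blast

end

lemma hoelder_kernel_of_density:
  fixes f :: "real \<Rightarrow> real"
  assumes ab: "a < b" and s: "0 < s"
    and fint: "(\<integral>y. f y \<partial>lborel) = 1"
    and c: "continuous_on UNIV f"
    and z: "\<forall>y. y \<notin> {a..b} \<longrightarrow> f y = 0"
    and hb: "\<forall>y\<in>{a..b}. \<bar>f y\<bar> \<le> M"
    and hh: "\<forall>x\<in>{a..b}. \<forall>y\<in>{a..b}. \<bar>f x - f y\<bar> \<le> M * \<bar>x - y\<bar> powr s"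
  shows "hoelder_kernel a b M s f"
proof -
  have M0: "0 < M"
  proof (rule ccontr)
    assume "\<not> 0 < M"
    then have "f y = 0" for y using hb z by (cases "y \<in> {a..b}") force+
    then show False using fint by simp
  qed
  have "\<bar>f y\<bar> \<le> M" for y using hb z M0 by (cases "y \<in> {a..b}") auto
  moreover have "\<bar>f x - f y\<bar> \<le> M * \<bar>x - y\<bar> powr s" for x y
    using hoelder_on_Icc_extend_zero[OF _ _ _ c z hh] ab M0 s by auto
  ultimately show ?thesis by unfold_locales (use ab s M0 c in auto)
qed

section \<open>The multiplier process\<close>

locale kernel_sample = hoelder_kernel a b M s f + prob_space P for a b M s f and P :: "'a measure" +
  fixes Y e :: "nat \<Rightarrow> 'a \<Rightarrow> real"
  assumes Y_meas[measurable]: "\<And>i. Y i \<in> borel_measurable P"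
  assumes e_meas[measurable]: "\<And>i. e i \<in> borel_measurable P"
begin

definition multiplier_mean :: "nat \<Rightarrow> 'a \<Rightarrow> real \<Rightarrow> real" where
  "multiplier_mean n \<omega> = (\<lambda>z. (1 / real n) * (\<Sum>i<n. e i \<omega> * f (Y i \<omega> - z)))"

lemma continuous_on_multiplier_mean: "continuous_on S (multiplier_mean n \<omega>)"
  unfolding multiplier_mean_def by (intro continuous_intros)

lemma borel_measurable_multiplier_mean[measurable]: "(\<lambda>\<omega>. multiplier_mean n \<omega> z) \<in> borel_measurable P"
  unfolding multiplier_mean_def by measurable

lemma borel_measurable_multiplier_mean_pair[measurable]: "(\<lambda>(\<omega>, z). multiplier_mean n \<omega> z) \<in> borel_measurable (P \<Otimes>\<^sub>M lborel)"
  unfolding multiplier_mean_def by measurable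

lemma borel_measurable_supnorm_multiplier_mean[measurable]: "(\<lambda>\<omega>. supnorm a b (multiplier_mean n \<omega>)) \<in> borel_measurable P"
  by (rule borel_measurable_supnorm[OF continuous_on_multiplier_mean borel_measurable_multiplier_mean])

lemma borel_measurable_norm_ab_multiplier_mean[measurable]: "(\<lambda>\<omega>. norm_ab (multiplier_mean n \<omega>)) \<in> borel_measurable P"
proof -
  have "(\<lambda>\<omega>. norm2 a b (multiplier_mean n \<omega>)) \<in> borel_measurable P"
    unfolding norm2_def set_lebesgue_integral_def by measurable
  then show ?thesis by (simp add: norm2_eq_norm_ab[OF continuous_on_multiplier_mean])
qed

lemma resolvent_multiplier_mean:
  assumes \<alpha>: "0 < \<alpha>"
  shows "resolvent a b f \<alpha> (multiplier_mean n \<omega>) = (\<lambda>z. \<Sum>i<n. (e i \<omega> / real n) * resolvent_kernel \<alpha> (Y i \<omega>) z)"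
proof -
  have eqg: "multiplier_mean n \<omega> = (\<lambda>z. \<Sum>i<n. (e i \<omega> / real n) * f (Y i \<omega> - z))"
    unfolding multiplier_mean_def by (simp add: sum_distrib_left)
  have "resolvent a b f \<alpha> (\<lambda>z. \<Sum>i<n. (e i \<omega> / real n) * f (Y i \<omega> - z)) =
      (\<lambda>z. \<Sum>i<n. (e i \<omega> / real n) * resolvent a b f \<alpha> (\<lambda>z. f (Y i \<omega> - z)) z)"
    by (rule resolvent_sum[OF \<alpha>]) (auto simp: continuous_on_f_shift)
  then show ?thesis unfolding resolvent_kernel_def eqg .
qed

lemma borel_measurable_supnorm_resolvent:
  assumes \<alpha>: "0 < \<alpha>"
  shows "(\<lambda>\<omega>. supnorm a b (resolvent a b f \<alpha> (multiplier_mean n \<omega>))) \<in> borel_measurable P"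
proof -
  have "(\<lambda>\<omega>. supnorm a b (\<lambda>z. \<Sum>i<n. (e i \<omega> / real n) * resolvent_kernel \<alpha> (Y i \<omega>) z)) \<in> borel_measurable P"
  proof (rule borel_measurable_supnorm)
    fix \<omega> show "continuous_on {a..b} (\<lambda>z. \<Sum>i<n. e i \<omega> / real n * resolvent_kernel \<alpha> (Y i \<omega>) z)"
      by (intro continuous_intros continuous_on_resolvent_kernel_arg \<alpha>)
    fix z show "(\<lambda>\<omega>. \<Sum>i<n. e i \<omega> / real n * resolvent_kernel \<alpha> (Y i \<omega>) z) \<in> borel_measurable P"
      using borel_measurable_resolvent_kernel[OF \<alpha>] by measurable
  qed
  then show ?thesis by (simp add: resolvent_multiplier_mean[OF \<alpha>])
qed

lemma q_ci_eq:
  "q_ci a b f \<gamma> \<alpha> n Y e \<omega> = 2 * supnorm a b (resolvent a b f \<alpha> (multiplier_mean n \<omega>))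
     + 3 * supnorm a b f * (opnorm_2inf a b (Tadj a b f) / 2 + sqrt \<alpha>) * sqrt (2 * ln (2 / \<gamma>))
       / (\<alpha> powr (3/2) * sqrt (real n))"
  unfolding q_ci_def nu_eps_def multiplier_mean_def ..

lemma borel_measurable_q_ci: "0 < \<alpha> \<Longrightarrow> (\<lambda>\<omega>. q_ci a b f \<gamma> \<alpha> n Y e \<omega>) \<in> borel_measurable P"
  unfolding q_ci_eq using borel_measurable_supnorm_resolvent by measurable

lemma q_ci_AE_cong:
  assumes e': "\<And>i. e' i \<in> borel_measurable P" and ae: "AE \<omega> in P. \<forall>i. e i \<omega> = e' i \<omega>"
    and \<alpha>: "0 < \<alpha>"
  shows "integrable P (\<lambda>\<omega>. 2 * q_ci a b f \<gamma> \<alpha> n Y e \<omega>) \<longleftrightarrow> integrable P (\<lambda>\<omega>. 2 * q_ci a b f \<gamma> \<alpha> n Y e' \<omega>)"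
    and "expectation (\<lambda>\<omega>. 2 * q_ci a b f \<gamma> \<alpha> n Y e \<omega>) = expectation (\<lambda>\<omega>. 2 * q_ci a b f \<gamma> \<alpha> n Y e' \<omega>)"
proof -
  interpret E': kernel_sample a b M s f P Y e' by unfold_locales (use e' in auto)
  have meas: "(\<lambda>\<omega>. 2 * q_ci a b f \<gamma> \<alpha> n Y e \<omega>) \<in> borel_measurable P"
    "(\<lambda>\<omega>. 2 * q_ci a b f \<gamma> \<alpha> n Y e' \<omega>) \<in> borel_measurable P"
    using borel_measurable_q_ci[OF \<alpha>] E'.borel_measurable_q_ci[OF \<alpha>] by auto
  have ae_eq: "AE \<omega> in P. 2 * q_ci a b f \<gamma> \<alpha> n Y e \<omega> = 2 * q_ci a b f \<gamma> \<alpha> n Y e' \<omega>"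
    using ae by eventually_elim (simp add: q_ci_def nu_eps_def)
  show "integrable P (\<lambda>\<omega>. 2 * q_ci a b f \<gamma> \<alpha> n Y e \<omega>) \<longleftrightarrow> integrable P (\<lambda>\<omega>. 2 * q_ci a b f \<gamma> \<alpha> n Y e' \<omega>)"
    by (rule integrable_cong_AE[OF meas ae_eq])
  show "expectation (\<lambda>\<omega>. 2 * q_ci a b f \<gamma> \<alpha> n Y e \<omega>) = expectation (\<lambda>\<omega>. 2 * q_ci a b f \<gamma> \<alpha> n Y e' \<omega>)"
    by (rule integral_cong_AE[OF meas ae_eq])
qed

end

locale kernel_multiplier_process = kernel_sample +
  assumes e_bound: "\<And>i \<omega>. \<bar>e i \<omega>\<bar> \<le> 1"
  assumes e_mean: "\<And>i. expectation (e i) = 0"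
  assumes indep: "indep_vars (\<lambda>_. borel) (\<lambda>k. case k of Inl i \<Rightarrow> Y i | Inr i \<Rightarrow> e i) UNIV"
begin

abbreviation sample_vars where "sample_vars \<equiv> (\<lambda>k. case k of Inl i \<Rightarrow> Y i | Inr i \<Rightarrow> e i)"

lemma indep_multiplier_terms: "indep_vars (\<lambda>_. borel) (\<lambda>i \<omega>. e i \<omega> * f (Y i \<omega> - z)) UNIV"
proof -
  have r: "indep_vars (\<lambda>j. PiM {Inl j, Inr j} (\<lambda>_. borel)) (\<lambda>j \<omega>. restrict (\<lambda>k. sample_vars k \<omega>) {Inl j, Inr j}) UNIV"
    by (rule indep_vars_restrict[OF indep]) (auto simp: disjoint_family_on_def)
  have c: "indep_vars (\<lambda>_. borel) (\<lambda>j \<omega>. (\<lambda>x. x (Inr j) * f (x (Inl j) - z)) (restrict (\<lambda>k. sample_vars k \<omega>) {Inl j, Inr j})) UNIV"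
    by (rule indep_vars_compose2[OF r]) measurable
  show ?thesis by (rule indep_vars_cong[THEN iffD1, OF _ _ _ c]) auto
qed

lemma indep_multiplier_kernel: "indep_var borel (e i) borel (\<lambda>\<omega>. f (Y i \<omega> - z))"
proof -
  have r: "indep_var (PiM {Inr i} (\<lambda>_. borel)) (\<lambda>\<omega>. restrict (\<lambda>k. sample_vars k \<omega>) {Inr i})
                     (PiM {Inl i} (\<lambda>_. borel)) (\<lambda>\<omega>. restrict (\<lambda>k. sample_vars k \<omega>) {Inl i})"
    by (rule indep_var_restrict[OF indep]) auto
  have "indep_var borel ((\<lambda>x. x (Inr i)) \<circ> (\<lambda>\<omega>. restrict (\<lambda>k. sample_vars k \<omega>) {Inr i}))
                   borel ((\<lambda>x. f (x (Inl i) - z)) \<circ> (\<lambda>\<omega>. restrict (\<lambda>k. sample_vars k \<omega>) {Inl i}))"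
    by (rule indep_var_compose[OF r]) measurable
  also have "((\<lambda>x. x (Inr i)) \<circ> (\<lambda>\<omega>. restrict (\<lambda>k. sample_vars k \<omega>) {Inr i})) = e i" by (auto simp: fun_eq_iff)
  also have "((\<lambda>x. f (x (Inl i) - z)) \<circ> (\<lambda>\<omega>. restrict (\<lambda>k. sample_vars k \<omega>) {Inl i})) = (\<lambda>\<omega>. f (Y i \<omega> - z))" by (auto simp: fun_eq_iff)
  finally show ?thesis .
qed

lemma abs_multiplier_term_le: "\<bar>e i \<omega> * f (Y i \<omega> - z)\<bar> \<le> M"
proof -
  have "\<bar>e i \<omega> * f (Y i \<omega> - z)\<bar> = \<bar>e i \<omega>\<bar> * \<bar>f (Y i \<omega> - z)\<bar>" by (simp add: abs_mult)
  also have "\<dots> \<le> 1 * M" by (intro mult_mono e_bound f_bound) auto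
  finally show ?thesis by simp
qed

lemma integrable_multiplier_term: "integrable P (\<lambda>\<omega>. e i \<omega> * f (Y i \<omega> - z))"
  by (rule integrable_bounded[OF _ abs_multiplier_term_le]) measurable

lemma expectation_multiplier_term: "expectation (\<lambda>\<omega>. e i \<omega> * f (Y i \<omega> - z)) = 0"
proof -
  have "expectation (\<lambda>\<omega>. e i \<omega> * f (Y i \<omega> - z)) = expectation (e i) * expectation (\<lambda>\<omega>. f (Y i \<omega> - z))"
  proof (rule indep_var_lebesgue_integral[OF indep_multiplier_kernel])
    show "integrable P (e i)" by (rule integrable_bounded[OF _ e_bound]) simp
    show "integrable P (\<lambda>\<omega>. f (Y i \<omega> - z))" by (rule integrable_bounded[OF _ f_bound]) measurable
  qed
  then show ?thesis by (simp add: e_mean)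
qed

lemma expectation_multiplier_sum_sq:
  "expectation (\<lambda>\<omega>. (\<Sum>i<n. e i \<omega> * f (Y i \<omega> - z))\<^sup>2) \<le> real n * M\<^sup>2"
proof -
  define Z where "Z = (\<lambda>i \<omega>. e i \<omega> * f (Y i \<omega> - z))"
  have Zm[measurable]: "Z i \<in> borel_measurable P" for i unfolding Z_def by measurable
  have Zi: "integrable P (Z i)" for i unfolding Z_def by (rule integrable_multiplier_term)
  have Zb: "\<bar>Z i \<omega>\<bar> \<le> M" for i \<omega> unfolding Z_def by (rule abs_multiplier_term_le)
  have ZZi: "integrable P (\<lambda>\<omega>. Z i \<omega> * Z j \<omega>)" for i j
    by (rule integrable_bounded[where B="M * M"]) (use M0 in \<open>auto simp: abs_mult intro!: mult_mono Zb\<close>)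
  have cross: "expectation (\<lambda>\<omega>. Z i \<omega> * Z j \<omega>) = 0" if "i \<noteq> j" for i j
  proof -
    have ind: "indep_vars (\<lambda>_. borel) Z {i, j}"
      by (rule indep_vars_subset[OF indep_multiplier_terms[of z, folded Z_def]]) auto
    have "expectation (\<lambda>\<omega>. \<Prod>k\<in>{i,j}. Z k \<omega>) = (\<Prod>k\<in>{i,j}. expectation (Z k))"
      by (rule indep_vars_lebesgue_integral[OF _ ind]) (auto intro: Zi)
    then show ?thesis using that by (simp add: Z_def expectation_multiplier_term)
  qed
  have diag: "expectation (\<lambda>\<omega>. Z i \<omega> * Z i \<omega>) \<le> M\<^sup>2" for i
  proof -
    have "expectation (\<lambda>\<omega>. Z i \<omega> * Z i \<omega>) \<le> expectation (\<lambda>\<omega>. M\<^sup>2)"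
    proof (rule integral_mono[OF ZZi])
      show "integrable P (\<lambda>\<omega>. M\<^sup>2)" by simp
      fix \<omega>
      have "\<bar>Z i \<omega>\<bar>\<^sup>2 \<le> M\<^sup>2" by (rule power_mono[OF Zb abs_ge_zero])
      then show "Z i \<omega> * Z i \<omega> \<le> M\<^sup>2" by (simp add: power2_eq_square)
    qed
    then show ?thesis by (simp add: prob_space)
  qed
  have "expectation (\<lambda>\<omega>. (\<Sum>i<n. Z i \<omega>)\<^sup>2) = expectation (\<lambda>\<omega>. \<Sum>i<n. \<Sum>j<n. Z i \<omega> * Z j \<omega>)"
    by (simp add: power2_eq_square sum_product)
  also have "\<dots> = (\<Sum>i<n. \<Sum>j<n. expectation (\<lambda>\<omega>. Z i \<omega> * Z j \<omega>))"
    by (simp add: Bochner_Integration.integral_sum ZZi)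
  also have "\<dots> = (\<Sum>i<n. expectation (\<lambda>\<omega>. Z i \<omega> * Z i \<omega>))"
  proof (rule sum.cong[OF refl])
    fix i assume i: "i \<in> {..<n}"
    have "(\<Sum>j<n. expectation (\<lambda>\<omega>. Z i \<omega> * Z j \<omega>)) = (\<Sum>j\<in>{i}. expectation (\<lambda>\<omega>. Z i \<omega> * Z j \<omega>))"
      by (rule sum.mono_neutral_right) (use i cross in auto)
    then show "(\<Sum>j<n. expectation (\<lambda>\<omega>. Z i \<omega> * Z j \<omega>)) = expectation (\<lambda>\<omega>. Z i \<omega> * Z i \<omega>)" by simp
  qed
  also have "\<dots> \<le> (\<Sum>i<n. M\<^sup>2)" by (rule sum_mono) (rule diag)
  finally show ?thesis by (simp add: Z_def)
qed

lemma multiplier_sum_tail_bound: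
  assumes t: "0 \<le> t" and n: "0 < n"
  shows "prob {\<omega>\<in>space P. \<bar>\<Sum>i<n. e i \<omega> * f (Y i \<omega> - z)\<bar> \<ge> t} \<le> 2 * exp (- 2 * t\<^sup>2 / (real n * (2 * M)\<^sup>2))"
proof -
  interpret H: Hoeffding_ineq P "{..<n}" "\<lambda>i \<omega>. e i \<omega> * f (Y i \<omega> - z)" "\<lambda>_. - M" "\<lambda>_. M"
     "\<Sum>i<n. expectation (\<lambda>\<omega>. e i \<omega> * f (Y i \<omega> - z))"
  proof unfold_locales
    show "indep_vars (\<lambda>_. borel) (\<lambda>i \<omega>. e i \<omega> * f (Y i \<omega> - z)) {..<n}"
      by (rule indep_vars_subset[OF indep_multiplier_terms]) auto
    fix i show "AE x in P. e i x * f (Y i x - z) \<in> {- M..M}"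
    proof (rule AE_I2)
      fix x show "e i x * f (Y i x - z) \<in> {- M..M}" using abs_multiplier_term_le[of i x z] by (auto simp: abs_le_iff)
    qed
  qed auto
  have pos: "(\<Sum>i<n. (M - - M)\<^sup>2) > 0" using n M0 by simp
  have "prob {\<omega>\<in>space P. \<bar>(\<Sum>i<n. e i \<omega> * f (Y i \<omega> - z)) - (\<Sum>i<n. expectation (\<lambda>\<omega>. e i \<omega> * f (Y i \<omega> - z)))\<bar> \<ge> t}
      \<le> 2 * exp (- 2 * t\<^sup>2 / (\<Sum>i<n. (M - - M)\<^sup>2))"
    by (rule H.Hoeffding_ineq_abs_ge[OF t pos])
  then show ?thesis by (simp add: expectation_multiplier_term)
qed

lemma abs_multiplier_mean_le: "\<bar>multiplier_mean n \<omega> z\<bar> \<le> M"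
proof (cases "n = 0")
  case True then show ?thesis using M0 by (simp add: multiplier_mean_def)
next
  case False
  have "\<bar>\<Sum>i<n. e i \<omega> * f (Y i \<omega> - z)\<bar> \<le> (\<Sum>i<n. \<bar>e i \<omega> * f (Y i \<omega> - z)\<bar>)" by (rule sum_abs)
  also have "\<dots> \<le> (\<Sum>i<n. M)" by (rule sum_mono) (rule abs_multiplier_term_le)
  finally have "\<bar>\<Sum>i<n. e i \<omega> * f (Y i \<omega> - z)\<bar> \<le> real n * M" by simp
  then show ?thesis using False by (simp add: multiplier_mean_def abs_mult field_simps)
qed

lemma multiplier_mean_hoelder: "\<bar>multiplier_mean n \<omega> z - multiplier_mean n \<omega> z'\<bar> \<le> M * \<bar>z - z'\<bar> powr s"
proof (cases "n = 0")
  case True then show ?thesis using M0 by (simp add: multiplier_mean_def)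
next
  case False
  have "\<bar>(\<Sum>i<n. e i \<omega> * f (Y i \<omega> - z)) - (\<Sum>i<n. e i \<omega> * f (Y i \<omega> - z'))\<bar>
       = \<bar>\<Sum>i<n. e i \<omega> * (f (Y i \<omega> - z) - f (Y i \<omega> - z'))\<bar>"
    by (simp add: sum_subtractf[symmetric] algebra_simps)
  also have "\<dots> \<le> (\<Sum>i<n. \<bar>e i \<omega> * (f (Y i \<omega> - z) - f (Y i \<omega> - z'))\<bar>)" by (rule sum_abs)
  also have "\<dots> \<le> (\<Sum>i<n. M * \<bar>z - z'\<bar> powr s)"
  proof (rule sum_mono)
    fix i
    have "\<bar>e i \<omega> * (f (Y i \<omega> - z) - f (Y i \<omega> - z'))\<bar> = \<bar>e i \<omega>\<bar> * \<bar>f (Y i \<omega> - z) - f (Y i \<omega> - z')\<bar>"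
      by (simp add: abs_mult)
    also have "\<dots> \<le> 1 * (M * \<bar>(Y i \<omega> - z) - (Y i \<omega> - z')\<bar> powr s)" by (intro mult_mono e_bound f_hoelder) auto
    finally show "\<bar>e i \<omega> * (f (Y i \<omega> - z) - f (Y i \<omega> - z'))\<bar> \<le> M * \<bar>z - z'\<bar> powr s"
      by (simp add: abs_minus_commute)
  qed
  finally have "\<bar>(\<Sum>i<n. e i \<omega> * f (Y i \<omega> - z)) - (\<Sum>i<n. e i \<omega> * f (Y i \<omega> - z'))\<bar> \<le> real n * (M * \<bar>z - z'\<bar> powr s)"
    by simp
  then show ?thesis using False
    by (simp add: multiplier_mean_def right_diff_distrib[symmetric] abs_mult field_simps)
qed

lemma integrable_supnorm_multiplier_mean: "integrable P (\<lambda>\<omega>. supnorm a b (multiplier_mean n \<omega>))"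
  by (rule integrable_bounded[where B=M]) (use supnorm_nonneg[OF continuous_on_multiplier_mean] in \<open>auto intro!: supnorm_le abs_multiplier_mean_le\<close>)

text \<open>Outside the event that the multiplier sum is large at one of the grid points
  \<open>a + j (b - a) / N\<close>, Hoelder continuity controls the sup norm by its grid values.\<close>

lemma supnorm_multiplier_mean_le_grid:
  assumes n: "0 < n" and N: "0 < N" and t: "0 \<le> t" and \<omega>: "\<omega> \<in> space P"
  defines "A \<equiv> (\<Union>j\<le>N. {\<omega>\<in>space P. real n * t \<le> \<bar>\<Sum>i<n. e i \<omega> * f (Y i \<omega> - (a + real j * ((b - a) / real N)))\<bar>})"
  shows "supnorm a b (multiplier_mean n \<omega>) \<le> t + M * ((b - a) / real N) powr s + M * indicator A \<omega>"
proof (rule supnorm_le)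
  define \<delta> where "\<delta> = (b - a) / real N"
  fix z assume z: "z \<in> {a..b}"
  obtain j where j: "j \<le> N" "\<bar>z - (a + real j * \<delta>)\<bar> \<le> \<delta>"
    using Icc_grid_point_near[OF ab N z] unfolding \<delta>_def by blast
  have "\<bar>multiplier_mean n \<omega> z - multiplier_mean n \<omega> (a + real j * \<delta>)\<bar> \<le> M * \<bar>z - (a + real j * \<delta>)\<bar> powr s"
    by (rule multiplier_mean_hoelder)
  also have "\<dots> \<le> M * \<delta> powr s" using j M0 s0 by (intro mult_left_mono powr_mono2) auto
  finally have d: "\<bar>multiplier_mean n \<omega> z\<bar> \<le> \<bar>multiplier_mean n \<omega> (a + real j * \<delta>)\<bar> + M * \<delta> powr s"
    by linarith
  show "\<bar>multiplier_mean n \<omega> z\<bar> \<le> t + M * \<delta> powr s + M * indicator A \<omega>"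
  proof (cases "\<omega> \<in> A")
    case True
    then have one: "indicator A \<omega> = (1::real)" by simp
    have "0 \<le> M * \<delta> powr s" using M0 by simp
    then show ?thesis unfolding one using abs_multiplier_mean_le[of n \<omega> z] t by linarith
  next
    case False
    then have "\<bar>\<Sum>i<n. e i \<omega> * f (Y i \<omega> - (a + real j * \<delta>))\<bar> < real n * t"
      using j(1) \<omega> unfolding A_def \<delta>_def by (auto simp: not_le)
    then have "\<bar>multiplier_mean n \<omega> (a + real j * \<delta>)\<bar> < t"
      using n by (simp add: multiplier_mean_def abs_mult field_simps)
    then show ?thesis using d False by simp
  qed
qed

lemma expectation_supnorm_multiplier_mean_grid:
  assumes n: "0 < n" and N: "0 < N" and t: "0 \<le> t"
  shows "expectation (\<lambda>\<omega>. supnorm a b (multiplier_mean n \<omega>)) \<le>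
    t + M * ((b - a) / real N) powr s + M * (real (N + 1) * (2 * exp (- 2 * (real n * t)\<^sup>2 / (real n * (2 * M)\<^sup>2))))"
proof -
  define A where "A j = {\<omega>\<in>space P. real n * t \<le> \<bar>\<Sum>i<n. e i \<omega> * f (Y i \<omega> - (a + real j * ((b - a) / real N)))\<bar>}" for j
  have Am: "A j \<in> sets P" for j unfolding A_def by measurable
  have "expectation (\<lambda>\<omega>. supnorm a b (multiplier_mean n \<omega>)) \<le> t + M * ((b - a) / real N) powr s + M * prob (\<Union>j\<le>N. A j)"
    by (rule expectation_le_plus_indicator[OF integrable_supnorm_multiplier_mean])
       (use Am supnorm_multiplier_mean_le_grid[OF n N t] in \<open>auto simp: A_def\<close>)
  also have "prob (\<Union>j\<le>N. A j) \<le> (\<Sum>j\<le>N. prob (A j))"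
    by (rule finite_measure_subadditive_finite) (use Am in auto)
  also have "\<dots> \<le> (\<Sum>j\<le>N. 2 * exp (- 2 * (real n * t)\<^sup>2 / (real n * (2 * M)\<^sup>2)))"
    unfolding A_def by (rule sum_mono, rule multiplier_sum_tail_bound) (use n t in auto)
  finally show ?thesis using M0 by (simp add: mult_left_mono)
qed

lemma expectation_multiplier_mean_sq: "0 < n \<Longrightarrow> expectation (\<lambda>\<omega>. (multiplier_mean n \<omega> z)\<^sup>2) \<le> M\<^sup>2 / real n"
proof -
  assume n: "0 < n"
  have "expectation (\<lambda>\<omega>. (multiplier_mean n \<omega> z)\<^sup>2) = expectation (\<lambda>\<omega>. (1 / real n)\<^sup>2 * (\<Sum>i<n. e i \<omega> * f (Y i \<omega> - z))\<^sup>2)"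
    unfolding multiplier_mean_def power_mult_distrib ..
  also have "\<dots> = (1 / real n)\<^sup>2 * expectation (\<lambda>\<omega>. (\<Sum>i<n. e i \<omega> * f (Y i \<omega> - z))\<^sup>2)"
    by (rule integral_mult_right_zero)
  also have "\<dots> \<le> (1 / real n)\<^sup>2 * (real n * M\<^sup>2)" by (intro mult_left_mono expectation_multiplier_sum_sq) auto
  also have "\<dots> = M\<^sup>2 / real n" using n by (simp add: power2_eq_square field_simps)
  finally show ?thesis .
qed

lemma integrable_indicator_Icc_const: "integrable lborel (\<lambda>z. indicator {a..b} z * (c::real))"
proof -
  have "set_integrable lborel {a..b} (\<lambda>z. c)" by (rule borel_integrable_atLeastAtMost') simp
  then show ?thesis by (simp add: set_integrable_def)
qed

lemma integral_indicator_Icc_const: "(\<integral>z. indicator {a..b} z * (c::real) \<partial>lborel) = (b - a) * c"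
proof -
  have "set_integrable lborel {a..b} (\<lambda>z. c)" by (rule borel_integrable_atLeastAtMost') simp
  from set_borel_integral_eq_integral(2)[OF this] have "(LINT z:{a..b}|lborel. c) = integral {a..b} (\<lambda>z. c)" .
  then show ?thesis using ab by (simp add: set_lebesgue_integral_def)
qed

lemma integrable_multiplier_mean_sq: "integrable lborel (\<lambda>z. indicator {a..b} z * (multiplier_mean n \<omega> z)\<^sup>2)"
proof -
  have "set_integrable lborel {a..b} (\<lambda>z. (multiplier_mean n \<omega> z)\<^sup>2)"
    by (rule borel_integrable_atLeastAtMost') (intro continuous_intros continuous_on_multiplier_mean)
  then show ?thesis by (simp add: set_integrable_def)
qed

lemma norm_ab_multiplier_mean_sq: "(norm_ab (multiplier_mean n \<omega>))\<^sup>2 = (\<integral>z. indicator {a..b} z * (multiplier_mean n \<omega> z)\<^sup>2 \<partial>lborel)"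
proof -
  have nn: "0 \<le> (\<integral>z. indicator {a..b} z * (multiplier_mean n \<omega> z)\<^sup>2 \<partial>lborel)"
    by (rule integral_nonneg_AE) (auto simp: indicator_def)
  have "norm_ab (multiplier_mean n \<omega>) = sqrt (\<integral>z. indicator {a..b} z * (multiplier_mean n \<omega> z)\<^sup>2 \<partial>lborel)"
    unfolding norm2_eq_norm_ab[OF continuous_on_multiplier_mean, symmetric] norm2_def set_lebesgue_integral_def by simp
  then show ?thesis using nn by simp
qed

lemma norm_ab_multiplier_mean_bounds: "0 \<le> norm_ab (multiplier_mean n \<omega>) \<and> norm_ab (multiplier_mean n \<omega>) \<le> sqrt (b - a) * M"
  using norm_ab_nonneg[OF continuous_on_multiplier_mean] norm_ab_le_sup[OF continuous_on_multiplier_mean abs_multiplier_mean_le] by auto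

lemma integrable_multiplier_mean_sq_pair:
  "integrable (P \<Otimes>\<^sub>M lborel) (\<lambda>(\<omega>, z). indicator {a..b} z * (multiplier_mean n \<omega> z)\<^sup>2)"
proof (rule pair_sigma_finite.Fubini_integrable)
  show "pair_sigma_finite P lborel" ..
  show "(\<lambda>(\<omega>, z). indicator {a..b} z * (multiplier_mean n \<omega> z)\<^sup>2) \<in> borel_measurable (P \<Otimes>\<^sub>M lborel)"
    by measurable
  show "AE \<omega> in P. integrable lborel (\<lambda>z. case (\<omega>, z) of (\<omega>, z) \<Rightarrow> indicator {a..b} z * (multiplier_mean n \<omega> z)\<^sup>2)"
    using integrable_multiplier_mean_sq by simp
  show "integrable P (\<lambda>\<omega>. \<integral>z. norm (case (\<omega>, z) of (\<omega>, z) \<Rightarrow> indicator {a..b} z * (multiplier_mean n \<omega> z)\<^sup>2) \<partial>lborel)"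
  proof (rule integrable_bounded[where B="(b - a) * M\<^sup>2"])
    show "(\<lambda>\<omega>. \<integral>z. norm (case (\<omega>, z) of (\<omega>, z) \<Rightarrow> indicator {a..b} z * (multiplier_mean n \<omega> z)\<^sup>2) \<partial>lborel)
        \<in> borel_measurable P"
      by measurable
    fix \<omega>
    have "\<bar>multiplier_mean n \<omega> z\<bar>\<^sup>2 \<le> M\<^sup>2" for z by (rule power_mono[OF abs_multiplier_mean_le abs_ge_zero])
    then have "(\<integral>z. norm (indicator {a..b} z * (multiplier_mean n \<omega> z)\<^sup>2) \<partial>lborel) \<le> (\<integral>z. indicator {a..b} z * M\<^sup>2 \<partial>lborel)"
      by (intro integral_mono integrable_norm integrable_multiplier_mean_sq integrable_indicator_Icc_const)
        (auto simp: indicator_def)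
    moreover have "0 \<le> (\<integral>z. norm (indicator {a..b} z * (multiplier_mean n \<omega> z)\<^sup>2) \<partial>lborel)"
      by (rule integral_nonneg_AE) auto
    ultimately show "\<bar>\<integral>z. norm (case (\<omega>, z) of (\<omega>, z) \<Rightarrow> indicator {a..b} z * (multiplier_mean n \<omega> z)\<^sup>2) \<partial>lborel\<bar>
        \<le> (b - a) * M\<^sup>2"
      using ab by (simp add: integral_indicator_Icc_const)
  qed
qed

lemma expectation_norm_ab_multiplier_mean_sq:
  assumes n: "0 < n"
  shows "expectation (\<lambda>\<omega>. (norm_ab (multiplier_mean n \<omega>))\<^sup>2) \<le> (b - a) * (M\<^sup>2 / real n)"
proof -
  interpret PL: pair_sigma_finite P lborel ..
  note prodint = integrable_multiplier_mean_sq_pair[of n]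
  have "expectation (\<lambda>\<omega>. (norm_ab (multiplier_mean n \<omega>))\<^sup>2)
      = (\<integral>\<omega>. (\<integral>z. indicator {a..b} z * (multiplier_mean n \<omega> z)\<^sup>2 \<partial>lborel) \<partial>P)"
    by (simp add: norm_ab_multiplier_mean_sq)
  also have "\<dots> = (\<integral>z. (\<integral>\<omega>. indicator {a..b} z * (multiplier_mean n \<omega> z)\<^sup>2 \<partial>P) \<partial>lborel)"
    by (rule PL.Fubini_integral[symmetric, OF prodint])
  also have "\<dots> \<le> (\<integral>z. indicator {a..b} z * (M\<^sup>2 / real n) \<partial>lborel)"
  proof (rule integral_mono[OF PL.integrable_snd[OF prodint] integrable_indicator_Icc_const])
    fix z
    have "(\<integral>\<omega>. indicator {a..b} z * (multiplier_mean n \<omega> z)\<^sup>2 \<partial>P)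
        = indicator {a..b} z * expectation (\<lambda>\<omega>. (multiplier_mean n \<omega> z)\<^sup>2)"
      by (rule integral_mult_right_zero)
    also have "\<dots> \<le> indicator {a..b} z * (M\<^sup>2 / real n)"
      by (intro mult_left_mono expectation_multiplier_mean_sq n) auto
    finally show "(\<integral>\<omega>. indicator {a..b} z * (multiplier_mean n \<omega> z)\<^sup>2 \<partial>P) \<le> indicator {a..b} z * (M\<^sup>2 / real n)" .
  qed
  also have "\<dots> = (b - a) * (M\<^sup>2 / real n)" by (rule integral_indicator_Icc_const)
  finally show ?thesis .
qed

lemma integrable_norm_ab_multiplier_mean: "integrable P (\<lambda>\<omega>. norm_ab (multiplier_mean n \<omega>))"
  by (rule integrable_bounded[where B="sqrt (b - a) * M"]) (use norm_ab_multiplier_mean_bounds in auto)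

lemma expectation_norm_ab_multiplier_mean:
  assumes n: "0 < n"
  shows "expectation (\<lambda>\<omega>. norm_ab (multiplier_mean n \<omega>)) \<le> M * sqrt (b - a) / sqrt (real n)"
proof -
  define c where "c = M * sqrt (b - a) / sqrt (real n)"
  have c0: "0 < c" unfolding c_def using M0 ab n by simp
  have c2: "c\<^sup>2 = (b - a) * (M\<^sup>2 / real n)" unfolding c_def using ab n by (simp add: power_divide power_mult_distrib)
  have sq_int: "integrable P (\<lambda>\<omega>. (norm_ab (multiplier_mean n \<omega>))\<^sup>2)"
  proof (rule integrable_bounded[where B="(sqrt (b - a) * M)\<^sup>2"])
    fix \<omega> show "\<bar>(norm_ab (multiplier_mean n \<omega>))\<^sup>2\<bar> \<le> (sqrt (b - a) * M)\<^sup>2"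
      using norm_ab_multiplier_mean_bounds[of n \<omega>] by (simp add: power_mono)
  qed measurable
  have "expectation (\<lambda>\<omega>. norm_ab (multiplier_mean n \<omega>)) \<le> expectation (\<lambda>\<omega>. (1 / (2 * c)) * (norm_ab (multiplier_mean n \<omega>))\<^sup>2 + c / 2)"
  proof (rule integral_mono[OF integrable_norm_ab_multiplier_mean])
    show "integrable P (\<lambda>\<omega>. 1 / (2 * c) * (norm_ab (multiplier_mean n \<omega>))\<^sup>2 + c / 2)"
      by (intro Bochner_Integration.integrable_add integrable_mult_right sq_int) simp
    fix \<omega>
    have "0 \<le> (norm_ab (multiplier_mean n \<omega>) - c)\<^sup>2" by simp
    then have "2 * c * norm_ab (multiplier_mean n \<omega>) \<le> (norm_ab (multiplier_mean n \<omega>))\<^sup>2 + c\<^sup>2" by (simp add: power2_eq_square algebra_simps)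
    then show "norm_ab (multiplier_mean n \<omega>) \<le> 1 / (2 * c) * (norm_ab (multiplier_mean n \<omega>))\<^sup>2 + c / 2"
      using c0 by (simp add: field_simps power2_eq_square)
  qed
  also have "\<dots> = (1 / (2 * c)) * expectation (\<lambda>\<omega>. (norm_ab (multiplier_mean n \<omega>))\<^sup>2) + c / 2"
    by (simp add: Bochner_Integration.integral_add sq_int prob_space)
  also have "\<dots> \<le> (1 / (2 * c)) * c\<^sup>2 + c / 2"
    using expectation_norm_ab_multiplier_mean_sq[OF n] c0 c2 by (intro add_right_mono mult_left_mono) auto
  also have "\<dots> = c" using c0 by (simp add: power2_eq_square field_simps)
  finally show ?thesis unfolding c_def .
qed

lemma integrable_supnorm_resolvent_multiplier_mean:
  assumes \<alpha>: "0 < \<alpha>"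
  shows "integrable P (\<lambda>\<omega>. supnorm a b (resolvent a b f \<alpha> (multiplier_mean n \<omega>)))"
proof (rule integrable_bounded[where B="(M + M * sqrt (b - a) * (sqrt (b - a) * M) / (2 * sqrt \<alpha>)) / \<alpha>"])
  show "(\<lambda>\<omega>. supnorm a b (resolvent a b f \<alpha> (multiplier_mean n \<omega>))) \<in> borel_measurable P"
    by (rule borel_measurable_supnorm_resolvent[OF \<alpha>])
  fix \<omega>
  have "supnorm a b (resolvent a b f \<alpha> (multiplier_mean n \<omega>))
      \<le> (supnorm a b (multiplier_mean n \<omega>) + M * sqrt (b - a) * norm_ab (multiplier_mean n \<omega>) / (2 * sqrt \<alpha>)) / \<alpha>"
    by (rule supnorm_resolvent_le[OF \<alpha> continuous_on_multiplier_mean])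
  also have "\<dots> \<le> (M + M * sqrt (b - a) * (sqrt (b - a) * M) / (2 * sqrt \<alpha>)) / \<alpha>"
    using supnorm_le[OF abs_multiplier_mean_le] norm_ab_multiplier_mean_bounds[of n \<omega>] \<alpha> M0 ab
    by (intro divide_right_mono add_mono divide_right_mono mult_left_mono) auto
  finally show "\<bar>supnorm a b (resolvent a b f \<alpha> (multiplier_mean n \<omega>))\<bar> \<le> \<dots>"
    using supnorm_nonneg[OF continuous_on_resolvent[OF \<alpha> continuous_on_multiplier_mean]] by simp
qed

lemma expectation_supnorm_resolvent_multiplier_mean_le:
  assumes \<alpha>: "0 < \<alpha>" and n: "0 < n"
  shows "expectation (\<lambda>\<omega>. supnorm a b (resolvent a b f \<alpha> (multiplier_mean n \<omega>))) \<le>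
       (expectation (\<lambda>\<omega>. supnorm a b (multiplier_mean n \<omega>)) + M * sqrt (b - a) * (M * sqrt (b - a) / sqrt (real n)) / (2 * sqrt \<alpha>)) / \<alpha>"
proof -
  have "expectation (\<lambda>\<omega>. supnorm a b (resolvent a b f \<alpha> (multiplier_mean n \<omega>)))
     \<le> expectation (\<lambda>\<omega>. (supnorm a b (multiplier_mean n \<omega>) + M * sqrt (b - a) * norm_ab (multiplier_mean n \<omega>) / (2 * sqrt \<alpha>)) / \<alpha>)"
    by (intro integral_mono integrable_supnorm_resolvent_multiplier_mean[OF \<alpha>]
          supnorm_resolvent_le[OF \<alpha> continuous_on_multiplier_mean] integrable_divide
          Bochner_Integration.integrable_add integrable_supnorm_multiplier_mean integrable_mult_right
          integrable_norm_ab_multiplier_mean)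
  also have "\<dots> = (expectation (\<lambda>\<omega>. supnorm a b (multiplier_mean n \<omega>)) + M * sqrt (b - a) * expectation (\<lambda>\<omega>. norm_ab (multiplier_mean n \<omega>)) / (2 * sqrt \<alpha>)) / \<alpha>"
    by (simp add: Bochner_Integration.integral_add integrable_supnorm_multiplier_mean integrable_norm_ab_multiplier_mean integrable_mult_right)
  also have "\<dots> \<le> (expectation (\<lambda>\<omega>. supnorm a b (multiplier_mean n \<omega>)) + M * sqrt (b - a) * (M * sqrt (b - a) / sqrt (real n)) / (2 * sqrt \<alpha>)) / \<alpha>"
    using expectation_norm_ab_multiplier_mean[OF n] \<alpha> M0 ab by (intro divide_right_mono add_left_mono mult_left_mono) auto
  finally show ?thesis .
qed

lemma expectation_supnorm_multiplier_mean:
  assumes n: "0 < n" and m: "1 \<le> real m * s"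
  shows "expectation (\<lambda>\<omega>. supnorm a b (multiplier_mean n \<omega>)) \<le>
     M * sqrt (2 * ln (2 * (real (n ^ m) + 1) * real n) / real n) + M * (b - a) powr s / real n + M / real n"
proof -
  define N where "N = n ^ m"
  have N0: "0 < N" unfolding N_def using n by simp
  define L where "L = 2 * (real N + 1) * real n"
  have L1: "1 \<le> L"
  proof -
    have "1 * 1 \<le> (2 * (real N + 1)) * real n" by (rule mult_mono) (use n in auto)
    then show ?thesis unfolding L_def by simp
  qed
  have lnL: "0 \<le> ln L" using L1 by simp
  define t where "t = M * sqrt (2 * ln L / real n)"
  have t0: "0 \<le> t" unfolding t_def using M0 lnL by simp
  have "expectation (\<lambda>\<omega>. supnorm a b (multiplier_mean n \<omega>)) \<le>
    t + M * ((b - a) / real N) powr s + M * (real (N + 1) * (2 * exp (- 2 * (real n * t)\<^sup>2 / (real n * (2 * M)\<^sup>2))))"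
    by (rule expectation_supnorm_multiplier_mean_grid[OF n N0 t0])
  also have "- 2 * (real n * t)\<^sup>2 / (real n * (2 * M)\<^sup>2) = - ln L"
  proof -
    have "(real n * t)\<^sup>2 = (real n)\<^sup>2 * M\<^sup>2 * (2 * ln L / real n)"
      unfolding t_def using lnL n by (simp add: power_mult_distrib)
    then show ?thesis using n M0 by (simp add: field_simps power2_eq_square)
  qed
  also have "M * (real (N + 1) * (2 * exp (- ln L))) = M / real n"
    using L1 n by (simp add: exp_minus L_def field_simps)
  also have "((b - a) / real N) powr s \<le> (b - a) powr s / real n"
  proof -
    have "((b - a) / real N) powr s = (b - a) powr s / real N powr s"
      using ab N0 by (simp add: powr_divide)
    also have "real N powr s = real n powr (real m * s)"
      unfolding N_def using n by (simp add: powr_realpow[symmetric] powr_powr)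
    also have "real n powr (real m * s) \<ge> real n powr 1"
      using n m by (intro powr_mono) auto
    then have "(b - a) powr s / real n powr (real m * s) \<le> (b - a) powr s / real n powr 1"
      using n by (intro divide_left_mono) auto
    finally show ?thesis using n by simp
  qed
  then have "M * ((b - a) / real N) powr s \<le> M * ((b - a) powr s / real n)"
    using M0 by (intro mult_left_mono) auto
  then have "M * ((b - a) / real N) powr s \<le> M * (b - a) powr s / real n" by simp
  finally show ?thesis unfolding t_def L_def N_def by simp
qed

lemma expectation_supnorm_multiplier_mean_rate:
  assumes \<alpha>: "0 < \<alpha>" "\<alpha> \<le> 1" and n: "1 \<le> n" and \<alpha>_ln: "\<alpha> * ln (real n) \<le> 5"
    and m: "1 \<le> real m * s"
  shows "expectation (\<lambda>\<omega>. supnorm a b (multiplier_mean n \<omega>)) \<le>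
     (M * sqrt (2 * (ln 4 + 5 * (real m + 1))) + M * ((b - a) powr s + 1)) / (sqrt \<alpha> * sqrt (real n))"
proof -
  define L where "L = 2 * (real (n ^ m) + 1) * real n"
  define r where "r = sqrt \<alpha> * sqrt (real n)"
  have r: "0 < r" "r \<le> real n"
  proof -
    have "sqrt \<alpha> * sqrt (real n) \<le> 1 * sqrt (real n)" using \<alpha> by (intro mult_right_mono) auto
    also have "\<dots> \<le> real n" using n by (simp add: real_sqrt_le_iff' power2_eq_square le_square)
    finally show "r \<le> real n" unfolding r_def .
  qed (use \<alpha> n in \<open>simp add: r_def\<close>)
  have "expectation (\<lambda>\<omega>. supnorm a b (multiplier_mean n \<omega>)) \<le>
      M * sqrt (2 * ln L / real n) + M * ((b - a) powr s + 1) / real n"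
    using expectation_supnorm_multiplier_mean[OF _ m, of n] n by (simp add: L_def add_divide_distrib algebra_simps)
  also have "M * sqrt (2 * ln L / real n) = M * sqrt (2 * (\<alpha> * ln L)) / r"
    using \<alpha> n by (simp add: r_def real_sqrt_mult real_sqrt_divide field_simps)
  also have "\<dots> \<le> M * sqrt (2 * (ln 4 + 5 * (real m + 1))) / r"
    using mult_ln_grid_size_le[OF \<alpha> n \<alpha>_ln, of m] M0 r unfolding L_def
    by (intro divide_right_mono mult_left_mono real_sqrt_le_mono) auto
  also have "M * ((b - a) powr s + 1) / real n \<le> M * ((b - a) powr s + 1) / r"
    using r M0 by (intro divide_left_mono) auto
  finally show ?thesis by (simp add: r_def add_divide_distrib)
qed

lemma expectation_supnorm_resolvent_multiplier_mean_rate: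
  assumes \<alpha>: "0 < \<alpha>" "\<alpha> \<le> 1" and n: "1 \<le> n" and \<alpha>_ln: "\<alpha> * ln (real n) \<le> 5"
    and m: "1 \<le> real m * s"
  shows "expectation (\<lambda>\<omega>. supnorm a b (resolvent a b f \<alpha> (multiplier_mean n \<omega>))) \<le>
     (M * sqrt (2 * (ln 4 + 5 * (real m + 1))) + M * ((b - a) powr s + 1) + M\<^sup>2 * (b - a) / 2) / (\<alpha> powr (3/2) * sqrt (real n))"
proof -
  define X where "X = M * sqrt (2 * (ln 4 + 5 * (real m + 1))) + M * ((b - a) powr s + 1)"
  have a32: "\<alpha> powr (3/2) = \<alpha> * sqrt \<alpha>"
    using \<alpha> powr_add[of \<alpha> 1 "1/2"] by (simp add: powr_half_sqrt)
  have "expectation (\<lambda>\<omega>. supnorm a b (resolvent a b f \<alpha> (multiplier_mean n \<omega>))) \<le>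
     (expectation (\<lambda>\<omega>. supnorm a b (multiplier_mean n \<omega>))
       + M * sqrt (b - a) * (M * sqrt (b - a) / sqrt (real n)) / (2 * sqrt \<alpha>)) / \<alpha>"
    using expectation_supnorm_resolvent_multiplier_mean_le[OF \<alpha>(1)] n by simp
  also have "\<dots> \<le> (X / (sqrt \<alpha> * sqrt (real n)) + M\<^sup>2 * (b - a) / 2 / (sqrt \<alpha> * sqrt (real n))) / \<alpha>"
    using expectation_supnorm_multiplier_mean_rate[OF \<alpha> n \<alpha>_ln m] \<alpha> ab
    by (intro divide_right_mono add_mono) (auto simp: X_def power2_eq_square field_simps)
  also have "\<dots> = (X + M\<^sup>2 * (b - a) / 2) / (\<alpha> powr (3/2) * sqrt (real n))"
    unfolding a32 using \<alpha> n by (simp add: field_simps)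
  finally show ?thesis unfolding X_def .
qed

lemma integrable_q_ci: "0 < \<alpha> \<Longrightarrow> 0 < n \<Longrightarrow> integrable P (\<lambda>\<omega>. q_ci a b f \<gamma> \<alpha> n Y e \<omega>)"
  unfolding q_ci_eq using integrable_supnorm_resolvent_multiplier_mean by simp

lemma expectation_supnorm_resolvent_bigo:
  fixes \<alpha> :: "nat \<Rightarrow> real"
  assumes \<alpha>: "\<And>n. 0 < \<alpha> n" "\<alpha> \<longlonglongrightarrow> 0"
    and \<alpha>_ln: "eventually (\<lambda>n. \<alpha> n * ln (real n) \<le> 5) sequentially"
  shows "(\<lambda>n. expectation (\<lambda>\<omega>. supnorm a b (resolvent a b f (\<alpha> n) (multiplier_mean n \<omega>))))
           \<in> O(\<lambda>n. 1 / (\<alpha> n powr (3/2) * sqrt (real n)))"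
proof -
  define m where "m = nat \<lceil>1 / s\<rceil>"
  have m: "1 \<le> real m * s"
  proof -
    have "1 / s \<le> real m" unfolding m_def by linarith
    then show ?thesis using s0 by (simp add: field_simps)
  qed
  define C where "C = M * sqrt (2 * (ln 4 + 5 * (real m + 1))) + M * ((b - a) powr s + 1) + M\<^sup>2 * (b - a) / 2"
  show ?thesis
  proof (rule bigoI[where c = C])
    have "eventually (\<lambda>n. \<alpha> n \<le> 1) sequentially"
      using order_tendstoD(2)[OF \<alpha>(2), of 1] by (auto elim: eventually_mono)
    with \<alpha>_ln eventually_ge_at_top[of 1]
    show "eventually (\<lambda>n. norm (expectation (\<lambda>\<omega>. supnorm a b (resolvent a b f (\<alpha> n) (multiplier_mean n \<omega>))))
        \<le> C * norm (1 / (\<alpha> n powr (3/2) * sqrt (real n)))) sequentially"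
    proof eventually_elim
      case (elim n)
      have "0 \<le> expectation (\<lambda>\<omega>. supnorm a b (resolvent a b f (\<alpha> n) (multiplier_mean n \<omega>)))"
        by (intro integral_nonneg_AE AE_I2 supnorm_nonneg continuous_on_resolvent \<alpha>(1) continuous_on_multiplier_mean)
      then show ?case
        using expectation_supnorm_resolvent_multiplier_mean_rate[OF \<alpha>(1)[of n] elim(3,2,1) m] \<alpha>(1)[of n]
        by (simp add: C_def)
    qed
  qed
qed

lemma expectation_q_ci_bigo:
  fixes \<alpha> :: "nat \<Rightarrow> real"
  assumes \<alpha>: "\<And>n. 0 < \<alpha> n" "\<alpha> \<longlonglongrightarrow> 0"
    and \<alpha>_ln: "eventually (\<lambda>n. \<alpha> n * ln (real n) \<le> 5) sequentially"
  shows "(\<lambda>n. expectation (\<lambda>\<omega>. 2 * q_ci a b f \<gamma> (\<alpha> n) n Y e \<omega>))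
           \<in> O(\<lambda>n. 1 / (\<alpha> n powr (3/2) * sqrt (real n)))"
proof -
  define g where "g n = 1 / (\<alpha> n powr (3/2) * sqrt (real n))" for n
  define c where "c n = 3 * supnorm a b f * (opnorm_2inf a b (Tadj a b f) / 2 + sqrt (\<alpha> n)) * sqrt (2 * ln (2 / \<gamma>))" for n
  define X where "X n = expectation (\<lambda>\<omega>. supnorm a b (resolvent a b f (\<alpha> n) (multiplier_mean n \<omega>)))" for n
  have eq: "eventually (\<lambda>n. expectation (\<lambda>\<omega>. 2 * q_ci a b f \<gamma> (\<alpha> n) n Y e \<omega>) = 4 * X n + 2 * (c n * g n)) sequentially"
    using eventually_ge_at_top[of 1]
  proof eventually_elim
    case (elim n)
    then show ?case
      using integrable_supnorm_resolvent_multiplier_mean[OF \<alpha>(1), of n]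
      by (simp add: q_ci_eq X_def c_def g_def prob_space)
  qed
  have big: "(\<lambda>n. 4 * X n + 2 * (c n * g n)) \<in> O(g)"
  proof (rule sum_in_bigo(1))
    have "X \<in> O(g)" unfolding X_def g_def by (rule expectation_supnorm_resolvent_bigo[OF \<alpha> \<alpha>_ln])
    then show "(\<lambda>n. 4 * X n) \<in> O(g)" by simp
    have "c \<longlonglongrightarrow> 3 * supnorm a b f * (opnorm_2inf a b (Tadj a b f) / 2 + sqrt 0) * sqrt (2 * ln (2 / \<gamma>))"
      unfolding c_def by (intro tendsto_intros \<alpha>(2))
    then have "(\<lambda>n. c n * g n) \<in> O(g)"
      by (rule convergent_mult_bigo) (unfold g_def, rule eventually_rate_nonzero[OF \<alpha>(1)])
    then show "(\<lambda>n. 2 * (c n * g n)) \<in> O(g)" by simp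
  qed
  with landau_o.big.in_cong[OF eq] show ?thesis unfolding g_def by blast
qed

end

section \<open>Expected diameters of the confidence sets\<close>

lemma expectation_q_g_bigo:
  fixes \<alpha> :: "nat \<Rightarrow> real"
  assumes "prob_space P" and \<alpha>: "\<And>n. 0 < \<alpha> n" "\<alpha> \<longlonglongrightarrow> 0"
  shows "(\<lambda>n. prob_space.expectation P (\<lambda>\<omega>. 2 * q_g N G a b f \<gamma> (\<alpha> n) n))
           \<in> O(\<lambda>n. 1 / (\<alpha> n powr (3/2) * sqrt (real n)))"
proof -
  interpret prob_space P by fact
  define c where "c n = 2 * sup_quantile N a b G \<gamma> * (opnorm_2inf a b (Tadj a b f) / 2 + sqrt (\<alpha> n))" for n
  have "c \<longlonglongrightarrow> 2 * sup_quantile N a b G \<gamma> * (opnorm_2inf a b (Tadj a b f) / 2 + sqrt 0)"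
    unfolding c_def by (intro tendsto_intros \<alpha>(2))
  then have "(\<lambda>n. c n * (1 / (\<alpha> n powr (3/2) * sqrt (real n)))) \<in> O(\<lambda>n. 1 / (\<alpha> n powr (3/2) * sqrt (real n)))"
    by (rule convergent_mult_bigo) (rule eventually_rate_nonzero[OF \<alpha>(1)])
  moreover have "expectation (\<lambda>\<omega>. 2 * q_g N G a b f \<gamma> (\<alpha> n) n) = c n * (1 / (\<alpha> n powr (3/2) * sqrt (real n)))" for n
    by (simp add: prob_space q_g_def c_def)
  ultimately show ?thesis by simp
qed

lemma (in prob_space) expectation_clipped_rademacher:
  fixes X :: "'a \<Rightarrow> real"
  assumes rad: "AE \<omega> in M. X \<omega> \<in> {-1, 1}" and X: "X \<in> borel_measurable M"
    and half: "prob {\<omega>\<in>space M. X \<omega> = 1} = 1/2"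
  shows "expectation (\<lambda>\<omega>. max (-1) (min 1 (X \<omega>))) = 0"
proof -
  define S where "S = {\<omega> \<in> space M. X \<omega> = 1}"
  have S: "S \<in> events" unfolding S_def using X by measurable
  have "AE \<omega> in M. max (-1) (min 1 (X \<omega>)) = 2 * indicator S \<omega> - (1::real)"
    using rad AE_space by eventually_elim (auto simp: S_def indicator_def)
  then have "expectation (\<lambda>\<omega>. max (-1) (min 1 (X \<omega>))) = expectation (\<lambda>\<omega>. 2 * indicator S \<omega> - (1::real))"
    by (rule integral_cong_AE[rotated 2]) (use X S in measurable)
  also have "\<dots> = 2 * prob S - 1"
    using S by (simp add: Bochner_Integration.integral_diff prob_space integrable_const_bound[where B=1])
  finally show ?thesis using half by (simp add: S_def)
qed

text \<open>Clipping to \<open>[-1, 1]\<close> turns a.s. Rademacher multipliers into multipliers bounded everywhere,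
  as the locale \<open>kernel_multiplier_process\<close> requires.\<close>

lemma rademacher_clipped:
  fixes \<epsilon> Y :: "nat \<Rightarrow> 'a \<Rightarrow> real"
  assumes "prob_space P"
    and rad: "\<forall>i. AE \<omega> in P. \<epsilon> i \<omega> \<in> {-1, 1}" "\<forall>i. \<epsilon> i \<in> borel_measurable P"
      "\<forall>i. measure P {\<omega>\<in>space P. \<epsilon> i \<omega> = 1} = 1/2"
    and indep: "prob_space.indep_vars P (\<lambda>_. borel) (\<lambda>k. case k of Inl i \<Rightarrow> Y i | Inr i \<Rightarrow> \<epsilon> i) UNIV"
  obtains \<epsilon>' where "\<And>i. \<epsilon>' i \<in> borel_measurable P" and "\<And>i \<omega>. \<bar>\<epsilon>' i \<omega>\<bar> \<le> 1"
    and "\<And>i. prob_space.expectation P (\<epsilon>' i) = 0"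
    and "prob_space.indep_vars P (\<lambda>_. borel) (\<lambda>k. case k of Inl i \<Rightarrow> Y i | Inr i \<Rightarrow> \<epsilon>' i) UNIV"
    and "AE \<omega> in P. \<forall>i. \<epsilon> i \<omega> = \<epsilon>' i \<omega>"
proof -
  interpret prob_space P by fact
  define clip :: "real \<Rightarrow> real" where "clip = (\<lambda>x. max (-1) (min 1 x))"
  define \<epsilon>' where "\<epsilon>' = (\<lambda>i \<omega>. clip (\<epsilon> i \<omega>))"
  have clipm: "clip \<in> borel_measurable borel" unfolding clip_def by measurable
  have \<epsilon>_meas: "\<epsilon> i \<in> borel_measurable P" for i using rad(2) by simp
  have ecm: "\<epsilon>' i \<in> borel_measurable P" for i
    unfolding \<epsilon>'_def clip_def using \<epsilon>_meas[of i] by measurable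
  have bound: "\<bar>\<epsilon>' i \<omega>\<bar> \<le> 1" for i \<omega> unfolding \<epsilon>'_def clip_def by (simp add: abs_le_iff)
  have ae: "AE \<omega> in P. \<forall>i. \<epsilon> i \<omega> = \<epsilon>' i \<omega>"
    unfolding AE_all_countable
  proof
    fix i show "AE \<omega> in P. \<epsilon> i \<omega> = \<epsilon>' i \<omega>"
      using rad(1)[rule_format, of i] by eventually_elim (auto simp: \<epsilon>'_def clip_def)
  qed
  have mean: "expectation (\<epsilon>' i) = 0" for i
    unfolding \<epsilon>'_def clip_def
    by (rule expectation_clipped_rademacher) (use rad \<epsilon>_meas in auto)
  define F :: "nat + nat \<Rightarrow> real \<Rightarrow> real" where "F = (\<lambda>k. case k of Inl _ \<Rightarrow> (\<lambda>x. x) | Inr _ \<Rightarrow> clip)"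
  have "indep_vars (\<lambda>_. borel) (\<lambda>k \<omega>. F k ((case k of Inl i \<Rightarrow> Y i | Inr i \<Rightarrow> \<epsilon> i) \<omega>)) UNIV"
  proof (rule indep_vars_compose2[OF indep])
    fix k :: "nat + nat" show "F k \<in> borel \<rightarrow>\<^sub>M borel" using clipm by (cases k) (auto simp: F_def)
  qed
  then have "indep_vars (\<lambda>_. borel) (\<lambda>k. case k of Inl i \<Rightarrow> Y i | Inr i \<Rightarrow> \<epsilon>' i) UNIV"
    by (rule indep_vars_cong[THEN iffD1, rotated 3]) (auto simp: F_def \<epsilon>'_def split: sum.splits)
  then show thesis by (rule that[OF ecm bound mean _ ae])
qed

theorem corollary5:
  fixes a b M s \<beta> C :: real
    and f \<phi> :: "real \<Rightarrow> real"
    and \<alpha> :: "nat \<Rightarrow> real"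
    and M\<^sub>P :: "'a measure"
    and Y \<epsilon> :: "nat \<Rightarrow> 'a \<Rightarrow> real"
    and N :: "'b measure"
    and G :: "real \<Rightarrow> 'b \<Rightarrow> real"
  assumes ab: "a < b"
    and beta: "0 < \<beta>"
    \<comment> \<open>f and phi are probability densities (of U and Z)\<close>
    and f_dens: "\<forall>y. 0 \<le> f y" "(\<integral>y. f y \<partial>lborel) = 1"
    and phi_dens: "\<forall>z. 0 \<le> \<phi> z" "(\<integral>z. \<phi> z \<partial>lborel) = 1"
    \<comment> \<open>Assumption D(ii): continuity and support in [a,b] of f, phi, r = T phi\<close>
    and cont: "continuous_on UNIV f" "continuous_on UNIV \<phi>" "continuous_on UNIV (Top a b f \<phi>)"
    and supp: "\<forall>y. y \<notin> {a..b} \<longrightarrow> f y = 0" "\<forall>z. z \<notin> {a..b} \<longrightarrow> \<phi> z = 0"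
              "\<forall>y. y \<notin> {a..b} \<longrightarrow> Top a b f \<phi> y = 0"
    \<comment> \<open>Assumption D(iii): f in C^s_M[a,b], s in (0,1]\<close>
    and s: "0 < s" "s \<le> 1"
    and hoelder: "\<forall>y\<in>{a..b}. \<bar>f y\<bar> \<le> M"
                 "\<forall>x\<in>{a..b}. \<forall>y\<in>{a..b}. \<bar>f x - f y\<bar> \<le> M * \<bar>x - y\<bar> powr s"
    \<comment> \<open>Assumption D(iv): T one-to-one on L2[a,b]\<close>
    and inj: "\<forall>g\<in>L2ab a b. (\<forall>y\<in>{a..b}. Top a b f g y = 0) \<longrightarrow> norm2 a b g = 0"
    \<comment> \<open>source condition\<close>
    and src: "source_class a b M \<beta> C \<phi> f"
    \<comment> \<open>Assumption D(i): i.i.d. sample with density r = T phi, independent Rademacher multipliers\<close>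
    and P: "prob_space M\<^sub>P"
    and Y_dist: "\<forall>i. distributed M\<^sub>P lborel (Y i) (\<lambda>y. ennreal (Top a b f \<phi> y))"
    and rad: "\<forall>i. AE \<omega> in M\<^sub>P. \<epsilon> i \<omega> \<in> {-1, 1}"
             "\<forall>i. \<epsilon> i \<in> borel_measurable M\<^sub>P"
             "\<forall>i. measure M\<^sub>P {\<omega>\<in>space M\<^sub>P. \<epsilon> i \<omega> = 1} = 1/2"
    and indep: "prob_space.indep_vars M\<^sub>P (\<lambda>_. borel)
                  (\<lambda>k. case k of Inl i \<Rightarrow> Y i | Inr i \<Rightarrow> \<epsilon> i) UNIV"
    \<comment> \<open>regularization sequence\<close>
    and alpha: "\<forall>n. 0 < \<alpha> n" "\<alpha> \<longlonglongrightarrow> 0"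
               "(\<lambda>n. \<alpha> n powr (3/2 + min \<beta> 1) * sqrt (real n)) \<longlonglongrightarrow> 0"
    \<comment> \<open>the Gaussian process G_2 (continuous version) with covariance E[f(Y-s)f(Y-t)]\<close>
    and GP: "centered_gaussian_process N {a..b} G
               (\<lambda>s t. prob_space.expectation M\<^sub>P (\<lambda>\<omega>. f (Y 0 \<omega> - s) * f (Y 0 \<omega> - t)))"
    and G_cont: "\<forall>\<omega>\<in>space N. continuous_on {a..b} (\<lambda>t. G t \<omega>)"
  shows "\<forall>\<gamma>::real. 0 < \<gamma> \<and> \<gamma> < 1 \<longrightarrow>
           (\<lambda>n. prob_space.expectation M\<^sub>P (\<lambda>\<omega>. 2 * q_g N G a b f \<gamma> (\<alpha> n) n))
              \<in> O(\<lambda>n. 1 / (\<alpha> n powr (3/2) * sqrt (real n))) \<and>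
           (\<forall>n\<ge>1. integrable M\<^sub>P (\<lambda>\<omega>. 2 * q_ci a b f \<gamma> (\<alpha> n) n Y \<epsilon> \<omega>)) \<and>
           (\<lambda>n. prob_space.expectation M\<^sub>P (\<lambda>\<omega>. 2 * q_ci a b f \<gamma> (\<alpha> n) n Y \<epsilon> \<omega>))
              \<in> O(\<lambda>n. 1 / (\<alpha> n powr (3/2) * sqrt (real n)))"
proof (intro allI impI, intro conjI)
  fix \<gamma> :: real
  interpret prob_space M\<^sub>P by (rule P)
  have kernel: "hoelder_kernel a b M s f"
    by (rule hoelder_kernel_of_density[OF ab s(1) f_dens(2) cont(1) supp(1) hoelder])
  have Y_meas: "Y i \<in> borel_measurable M\<^sub>P" for i
    using distributed_measurable[OF Y_dist[rule_format, of i]] by (simp add: measurable_lborel1)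
  obtain \<epsilon>' where clipped: "\<And>i. \<epsilon>' i \<in> borel_measurable M\<^sub>P" "\<And>i \<omega>. \<bar>\<epsilon>' i \<omega>\<bar> \<le> 1"
      "\<And>i. expectation (\<epsilon>' i) = 0"
      "indep_vars (\<lambda>_. borel) (\<lambda>k. case k of Inl i \<Rightarrow> Y i | Inr i \<Rightarrow> \<epsilon>' i) UNIV"
      "AE \<omega> in M\<^sub>P. \<forall>i. \<epsilon> i \<omega> = \<epsilon>' i \<omega>"
    by (rule rademacher_clipped[OF P rad indep]) blast
  interpret R: kernel_multiplier_process a b M s f M\<^sub>P Y \<epsilon>'
    using kernel P Y_meas clipped(1-4) by (simp add: kernel_multiplier_process_def
      kernel_multiplier_process_axioms_def kernel_sample_def kernel_sample_axioms_def)
  interpret S: kernel_sample a b M s f M\<^sub>P Y \<epsilon>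
    using kernel P Y_meas rad(2) by (simp add: kernel_sample_def kernel_sample_axioms_def)
  note transfer = S.q_ci_AE_cong[OF clipped(1,5) alpha(1)[rule_format]]
  show "(\<lambda>n. expectation (\<lambda>\<omega>. 2 * q_g N G a b f \<gamma> (\<alpha> n) n)) \<in> O(\<lambda>n. 1 / (\<alpha> n powr (3/2) * sqrt (real n)))"
    using expectation_q_g_bigo[OF P] alpha(1,2) by blast
  show "\<forall>n\<ge>1. integrable M\<^sub>P (\<lambda>\<omega>. 2 * q_ci a b f \<gamma> (\<alpha> n) n Y \<epsilon> \<omega>)"
    unfolding transfer(1) using R.integrable_q_ci alpha(1) by simp
  show "(\<lambda>n. expectation (\<lambda>\<omega>. 2 * q_ci a b f \<gamma> (\<alpha> n) n Y \<epsilon> \<omega>)) \<in> O(\<lambda>n. 1 / (\<alpha> n powr (3/2) * sqrt (real n)))"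
    unfolding transfer(2) using R.expectation_q_ci_bigo alpha(1,2) eventually_mult_ln_le[OF alpha] by blast
qed

end
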